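(* Let $(u,\phi,\theta,\eta)$ be a solution of the system $\rho u_{tt}=\mu u_{xx}+b\phi_x$, $J\phi_{tt}=\alpha\phi_{xx}-bu_x-\xi\phi-\beta\theta_x$, $c\theta_t=-\beta\phi_{xt}+\int_0^\infty\kappa(s)\eta_{xx}(x,s)ds$, $\eta_t=\theta-\eta_s$ on $(0,\pi)\times(0,\infty)$ with boundary conditions $u=\phi_x=\theta=0$ at $x=0,\pi$, $\eta(0,s)=\eta(\pi,s)=0$, $\eta(x,0)=0$. Then the functional \[ F_1(t)=-\frac{2c}{g(0)}\int_0^{+\infty}\kappa(s)\langle\theta(t),\eta^t(s)\rangle ds \] satisfies, for every $\varepsilon_1>0$, \[ \frac{d}{dt}F_1(t)\le-c\|\theta\|^2-\|\eta\|_{\mathcal V}^2+\varepsilon_1\|\phi_t\|^2-M\Big(1+\frac1{\varepsilon_1}\Big)\int_0^{+\infty}\kappa'(s)\|\eta_x(s)\|^2ds, \] where $M>0$ is a constant independent of $\varepsilon_1$.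
   Context: $\rho,J,c,\mu,b,\alpha,\xi$ are positive constants with $\mu\xi>b^2$; $\beta\ne0$ real. $\kappa$ satisfies (h1) $\kappa\in C([0,\infty))\cap L^1(0,\infty)$; (h2) $\kappa>0$, $\kappa'\le0$; (h3) $g(0):=\int_0^\infty\kappa(s)ds$; (h4) $\kappa'\le-\delta\kappa$ for some $\delta>0$. $\eta=\eta^t(x,s)=\int_0^s\theta(x,t-\tau)d\tau$. $\langle\cdot,\cdot\rangle,\|\cdot\|$ are the $L^2(0,\pi)$ inner product and norm; $\|\eta\|_{\mathcal V}^2=\int_0^\infty\kappa(s)\|\eta_x(s)\|^2ds$. Solutions are sufficiently regular (strong) solutions so that differentiation is legitimate. *)

theory Defs
  imports "HOL-Analysis.Analysis"
begin

definition dx :: "(real \<Rightarrow> real \<Rightarrow> real) \<Rightarrow> real \<Rightarrow> real \<Rightarrow> real" where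
  "dx f x t = deriv (\<lambda>y. f y t) x"

definition dt :: "(real \<Rightarrow> real \<Rightarrow> real) \<Rightarrow> real \<Rightarrow> real \<Rightarrow> real" where
  "dt f x t = deriv (\<lambda>\<tau>. f x \<tau>) t"

text \<open>The history variable is written eta x t s (= eta^t(x,s)); its slice for fixed s:\<close>

definition slice :: "(real \<Rightarrow> real \<Rightarrow> real \<Rightarrow> real) \<Rightarrow> real \<Rightarrow> real \<Rightarrow> real \<Rightarrow> real" where
  "slice eta s = (\<lambda>x t. eta x t s)"

definition ds :: "(real \<Rightarrow> real \<Rightarrow> real \<Rightarrow> real) \<Rightarrow> real \<Rightarrow> real \<Rightarrow> real \<Rightarrow> real" where
  "ds eta x t s = deriv (\<lambda>\<sigma>. eta x t \<sigma>) s"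

definition L2ip :: "(real \<Rightarrow> real) \<Rightarrow> (real \<Rightarrow> real) \<Rightarrow> real" where
  "L2ip f g = integral {0..pi} (\<lambda>x. f x * g x)"

definition L2norm :: "(real \<Rightarrow> real) \<Rightarrow> real" where
  "L2norm f = sqrt (integral {0..pi} (\<lambda>x. (f x)^2))"

definition g0 :: "(real \<Rightarrow> real) \<Rightarrow> real" where
  "g0 kappa = integral {0..} kappa"

definition Vnorm2 :: "(real \<Rightarrow> real) \<Rightarrow> (real \<Rightarrow> real \<Rightarrow> real \<Rightarrow> real) \<Rightarrow> real \<Rightarrow> real" where
  "Vnorm2 kappa eta t = integral {0..} (\<lambda>s. kappa s * (L2norm (\<lambda>x. dx (slice eta s) x t))^2)"

definition F1 :: "real \<Rightarrow> (real \<Rightarrow> real) \<Rightarrow> (real \<Rightarrow> real \<Rightarrow> real) \<Rightarrow>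
    (real \<Rightarrow> real \<Rightarrow> real \<Rightarrow> real) \<Rightarrow> real \<Rightarrow> real" where
  "F1 c kappa theta eta t =
     - (2 * c / g0 kappa) * integral {0..} (\<lambda>s. kappa s * L2ip (\<lambda>x. theta x t) (\<lambda>x. eta x t s))"

text \<open>Regularity ("sufficiently regular strong solution"): classical C^2 in (x,t).\<close>

definition C2fun :: "(real \<Rightarrow> real \<Rightarrow> real) \<Rightarrow> bool" where
  "C2fun f \<longleftrightarrow>
     (\<forall>g \<in> {f, dx f, dt f}. \<forall>x t. (\<lambda>y. g y t) differentiable (at x) \<and> (\<lambda>\<tau>. g x \<tau>) differentiable (at t)) \<and>
     (\<forall>g \<in> {f, dx f, dt f, dx (dx f), dt (dx f), dx (dt f), dt (dt f)}.
        continuous_on UNIV (\<lambda>(x, t). g x t))"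

definition eta_regular :: "(real \<Rightarrow> real \<Rightarrow> real \<Rightarrow> real) \<Rightarrow> bool" where
  "eta_regular eta \<longleftrightarrow>
     (\<forall>s. C2fun (slice eta s)) \<and>
     (\<forall>x t s. (\<lambda>\<sigma>. eta x t \<sigma>) differentiable (at s)) \<and>
     (\<forall>h \<in> {eta, \<lambda>x t s. dx (slice eta s) x t, \<lambda>x t s. dx (dx (slice eta s)) x t,
              \<lambda>x t s. dt (slice eta s) x t, ds eta}.
        continuous_on UNIV (\<lambda>(x, t, s). h x t s)) \<and>
     (\<forall>a b. \<exists>B. \<forall>x\<in>{0..pi}. \<forall>t\<in>{a..b}. \<forall>s\<ge>0.
        \<bar>eta x t s\<bar> \<le> B * (1 + s) \<and>
        \<bar>dx (slice eta s) x t\<bar> \<le> B * (1 + s) \<and>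
        \<bar>dx (dx (slice eta s)) x t\<bar> \<le> B * (1 + s) \<and>
        \<bar>dt (slice eta s) x t\<bar> \<le> B * (1 + s) \<and>
        \<bar>ds eta x t s\<bar> \<le> B * (1 + s))"

definition is_solution ::
  "real \<Rightarrow> real \<Rightarrow> real \<Rightarrow> real \<Rightarrow> real \<Rightarrow> real \<Rightarrow> real \<Rightarrow> real \<Rightarrow> (real \<Rightarrow> real) \<Rightarrow>
   (real \<Rightarrow> real \<Rightarrow> real) \<Rightarrow> (real \<Rightarrow> real \<Rightarrow> real) \<Rightarrow> (real \<Rightarrow> real \<Rightarrow> real) \<Rightarrow>
   (real \<Rightarrow> real \<Rightarrow> real \<Rightarrow> real) \<Rightarrow> bool" where
  "is_solution rho J c mu b alpha xi beta kappa u phi theta eta \<longleftrightarrow>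
     C2fun u \<and> C2fun phi \<and> C2fun theta \<and> eta_regular eta \<and>
     (\<forall>x\<in>{0<..<pi}. \<forall>t>0.
        rho * dt (dt u) x t = mu * dx (dx u) x t + b * dx phi x t \<and>
        J * dt (dt phi) x t = alpha * dx (dx phi) x t - b * dx u x t - xi * phi x t
                                - beta * dx theta x t \<and>
        c * dt theta x t = - beta * dt (dx phi) x t
                           + integral {0..} (\<lambda>s. kappa s * dx (dx (slice eta s)) x t) \<and>
        (\<forall>s>0. dt (slice eta s) x t = theta x t - ds eta x t s)) \<and>
     (\<forall>t>0. u 0 t = 0 \<and> u pi t = 0 \<and> dx phi 0 t = 0 \<and> dx phi pi t = 0 \<and>
            theta 0 t = 0 \<and> theta pi t = 0 \<and>
            (\<forall>s\<ge>0. eta 0 t s = 0 \<and> eta pi t s = 0) \<and>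
            (\<forall>x\<in>{0..pi}. eta x t 0 = 0))"

end

theory Submission
  imports Defs
begin

text \<open>
  Write \<open>\<langle>\<theta>, \<eta>(s)\<rangle>\<close> for the \<open>L\<^sup>2(0,\<pi>)\<close> pairing at time \<open>t\<close>. The exponential decay
  of \<open>\<kappa>\<close> dominates the linear growth in \<open>s\<close> of \<open>\<eta>\<close> and its derivatives, so \<open>F1\<close> can be
  differentiated under both integrals. The history equation \<open>\<eta>\<^sub>t = \<theta> - \<eta>\<^sub>s\<close> and an integration
  by parts in \<open>s\<close> (with \<open>\<eta>(0) = 0\<close>) turn \<open>\<integral>\<kappa>(s)\<langle>\<theta>, \<eta>\<^sub>t(s)\<rangle>\<close> into
  \<open>g(0) \<parallel>\<theta>\<parallel>\<^sup>2 + \<integral>\<kappa>'(s)\<langle>\<theta>, \<eta>(s)\<rangle>\<close>, the source of \<open>-2c \<parallel>\<theta>\<parallel>\<^sup>2\<close>. The heat equation and an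
  integration by parts in \<open>x\<close> turn \<open>c \<langle>\<theta>\<^sub>t, \<eta>(s)\<rangle>\<close> into
  \<open>\<beta> \<langle>\<phi>\<^sub>t, \<eta>\<^sub>x(s)\<rangle> - \<integral>\<kappa>(\<sigma>)\<langle>\<eta>\<^sub>x(\<sigma>), \<eta>\<^sub>x(s)\<rangle> d\<sigma>\<close>. The three remaining terms are bounded by
  Young's inequality (yielding \<open>\<epsilon> \<parallel>\<phi>\<^sub>t\<parallel>\<^sup>2\<close>), by \<open>2ab \<le> a\<^sup>2 + b\<^sup>2\<close> in \<open>(\<sigma>, s)\<close> (yielding
  \<open>2 \<parallel>\<eta>\<parallel>\<^sub>V\<^sup>2\<close>) and by Young's and Poincare's inequalities (yielding \<open>c \<parallel>\<theta>\<parallel>\<^sup>2\<close>). Finally (h4)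
  gives \<open>\<delta> \<parallel>\<eta>\<parallel>\<^sub>V\<^sup>2 \<le> -\<integral>\<kappa>'(s) \<parallel>\<eta>\<^sub>x(s)\<parallel>\<^sup>2\<close>, which absorbs all \<open>\<parallel>\<eta>\<parallel>\<^sub>V\<close>-terms but one
  copy of \<open>-\<parallel>\<eta>\<parallel>\<^sub>V\<^sup>2\<close>.
\<close>

section \<open>Parametric and improper integrals on the real line\<close>

lemma continuous_on_compose_curried2:
  assumes "continuous_on UNIV (\<lambda>(x, y). h x y)" "continuous_on S f" "continuous_on S g"
  shows "continuous_on S (\<lambda>p. h (f p) (g p))"
  using continuous_on_compose2[OF assms(1) continuous_on_Pair[OF assms(2,3)]] by simp

lemma continuous_on_compose_curried3:
  assumes "continuous_on UNIV (\<lambda>(x, y, z). h x y z)"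
    and "continuous_on S f" "continuous_on S g" "continuous_on S k"
  shows "continuous_on S (\<lambda>p. h (f p) (g p) (k p))"
  using continuous_on_compose2[OF assms(1) continuous_on_Pair[OF assms(2) continuous_on_Pair[OF assms(3,4)]]]
  by simp

lemma continuous_on_section:
  fixes f :: "real \<Rightarrow> real \<Rightarrow> real"
  assumes "continuous_on (A \<times> C) (\<lambda>(x, \<sigma>). f x \<sigma>)"
  shows "x \<in> A \<Longrightarrow> continuous_on C (f x)" and "\<sigma> \<in> C \<Longrightarrow> continuous_on A (\<lambda>x. f x \<sigma>)"
proof -
  show "continuous_on C (f x)" if "x \<in> A"
  proof -
    have "continuous_on C (\<lambda>\<sigma>. (\<lambda>(x, \<sigma>). f x \<sigma>) (x, \<sigma>))"
      by (rule continuous_on_compose2[OF assms continuous_on_Pair[OF continuous_on_const continuous_on_id]])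
        (use that in auto)
    then show ?thesis by simp
  qed
  show "continuous_on A (\<lambda>x. f x \<sigma>)" if "\<sigma> \<in> C"
  proof -
    have "continuous_on A (\<lambda>x. (\<lambda>(x, \<sigma>). f x \<sigma>) (x, \<sigma>))"
      by (rule continuous_on_compose2[OF assms continuous_on_Pair[OF continuous_on_id continuous_on_const]])
        (use that in auto)
    then show ?thesis by simp
  qed
qed

lemma continuous_on_integral_interval:
  fixes F :: "real \<Rightarrow> real \<Rightarrow> real"
  assumes "continuous_on (U \<times> {a..b}) (\<lambda>p. F (fst p) (snd p))"
  shows "continuous_on U (\<lambda>s. integral {a..b} (F s))"
  using integral_continuous_on_param[of U a b F] assms by (simp add: cbox_interval split_beta)

lemma has_real_derivative_integral_interval:
  fixes F F' :: "real \<Rightarrow> real \<Rightarrow> real"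
  assumes "\<And>\<tau> x. ((\<lambda>\<tau>. F \<tau> x) has_real_derivative F' \<tau> x) (at \<tau>)"
    and "\<And>\<tau>. continuous_on {a..b} (F \<tau>)"
    and "continuous_on (UNIV \<times> {a..b}) (\<lambda>p. F' (fst p) (snd p))"
  shows "((\<lambda>\<tau>. integral {a..b} (F \<tau>)) has_real_derivative integral {a..b} (F' \<tau>)) (at \<tau>)"
  using leibniz_rule_field_derivative[of UNIV a b F F' \<tau>] assms
  by (auto simp: cbox_interval split_beta integrable_continuous_interval)

lemma abs_integral_interval_le:
  fixes f :: "real \<Rightarrow> real"
  assumes "a \<le> b" "continuous_on {a..b} f" "\<And>x. x \<in> {a..b} \<Longrightarrow> \<bar>f x\<bar> \<le> C"
  shows "\<bar>integral {a..b} f\<bar> \<le> (b - a) * C"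
proof -
  have "norm (integral {a..b} f) \<le> integral {a..b} (\<lambda>x. C)"
    using assms by (intro integral_norm_bound_integral integrable_continuous_interval)
      (auto simp: integrable_const_ivl)
  also have "\<dots> = (b - a) * C" using assms(1) by simp
  finally show ?thesis by simp
qed

lemma abs_integral_mult_le:
  fixes p q :: "real \<Rightarrow> real"
  assumes "a \<le> b" "continuous_on {a..b} p" "continuous_on {a..b} q"
    and "\<And>x. x \<in> {a..b} \<Longrightarrow> \<bar>p x\<bar> \<le> P" "\<And>x. x \<in> {a..b} \<Longrightarrow> \<bar>q x\<bar> \<le> Q"
  shows "\<bar>integral {a..b} (\<lambda>x. p x * q x)\<bar> \<le> (b - a) * (P * Q)"
proof (rule abs_integral_interval_le)
  show "\<bar>p x * q x\<bar> \<le> P * Q" if "x \<in> {a..b}" for x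
    unfolding abs_mult using assms(4,5)[OF that] by (intro mult_mono) auto
qed (use assms in \<open>auto intro: continuous_intros\<close>)

lemma abs_integral_0_pi_mult_le:
  fixes p q :: "real \<Rightarrow> real"
  assumes "continuous_on {0..pi} p" "continuous_on {0..pi} q"
    and "\<And>x. x \<in> {0..pi} \<Longrightarrow> \<bar>p x\<bar> \<le> B * w" "\<And>x. x \<in> {0..pi} \<Longrightarrow> \<bar>q x\<bar> \<le> B * w"
  shows "\<bar>integral {0..pi} (\<lambda>x. p x * q x)\<bar> \<le> pi * B^2 * w^2"
  using abs_integral_mult_le[OF _ assms] by (simp add: power2_eq_square mult_ac)

lemma integral_linear_combination:
  fixes f g :: "'a::euclidean_space \<Rightarrow> real"
  assumes "f integrable_on S" "g integrable_on S"
  shows "integral S (\<lambda>x. p * f x + q * g x) = p * integral S f + q * integral S g"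
  using assms by (simp add: integral_add integrable_on_mult_right)

lemma young_inequality_real:
  fixes a b e :: real
  assumes "e > 0"
  shows "2 * a * b \<le> e * a^2 + b^2 / e"
proof -
  have "0 \<le> (e * a - b)^2 / e" using assms by simp
  also have "\<dots> = e * a^2 - 2 * a * b + b^2 / e"
    using assms by (simp add: field_simps power2_eq_square)
  finally show ?thesis by simp
qed

lemma square_integral_le:
  fixes f :: "real \<Rightarrow> real"
  assumes ab: "a \<le> b" and f: "continuous_on {a..b} f"
  shows "(integral {a..b} f)^2 \<le> (b - a) * integral {a..b} (\<lambda>x. (f x)^2)"
proof -
  define I where "I = integral {a..b} f"
  define J where "J = integral {a..b} (\<lambda>x. (f x)^2)"
  have "0 \<le> integral {a..b} (\<lambda>x. ((b - a) * f x - I)^2)"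
    by (rule integral_nonneg) (auto intro!: integrable_continuous_interval continuous_intros f)
  also have "\<dots> = integral {a..b} (\<lambda>x. (b - a)^2 * (f x)^2 - (2 * (b - a) * I) * f x + I^2)"
    by (simp add: power2_eq_square algebra_simps)
  also have "\<dots> = (b - a)^2 * J - (2 * (b - a) * I) * I + I^2 * (b - a)"
    using ab f unfolding I_def J_def
    by (simp add: integral_add integral_diff integrable_continuous_interval continuous_intros
        integrable_const_ivl)
  also have "\<dots> = (b - a) * ((b - a) * J - I^2)"
    by (simp add: power2_eq_square algebra_simps)
  finally have "I^2 \<le> (b - a) * J \<or> b - a = 0"
    using ab by (auto simp: zero_le_mult_iff)
  then show ?thesis
    using ab by (auto simp: I_def J_def)
qed

lemma poincare_inequality:
  fixes u u' :: "real \<Rightarrow> real"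
  assumes ab: "a \<le> b"
    and du: "\<And>x. x \<in> {a..b} \<Longrightarrow> (u has_real_derivative u' x) (at x)"
    and u': "continuous_on {a..b} u'" and ua: "u a = 0"
  shows "integral {a..b} (\<lambda>x. (u x)^2) \<le> (b - a)^2 * integral {a..b} (\<lambda>x. (u' x)^2)"
proof -
  define J where "J = integral {a..b} (\<lambda>x. (u' x)^2)"
  have u: "continuous_on {a..b} u"
    by (rule DERIV_continuous_on) (use du in \<open>auto intro: has_field_derivative_at_within\<close>)
  have pointwise: "(u x)^2 \<le> (b - a) * J" if x: "x \<in> {a..b}" for x
  proof -
    have u'_x: "continuous_on {a..x} u'" by (rule continuous_on_subset[OF u']) (use x in auto)
    have "(u' has_integral (u x - u a)) {a..x}"
      using du x by (intro fundamental_theorem_of_calculus)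
        (auto simp: has_real_derivative_iff_has_vector_derivative intro: has_vector_derivative_at_within)
    then have "u x = integral {a..x} u'" using ua by (simp add: integral_unique)
    then have "(u x)^2 \<le> (x - a) * integral {a..x} (\<lambda>y. (u' y)^2)"
      using square_integral_le[OF _ u'_x] x by simp
    also have "\<dots> \<le> (b - a) * J"
    proof (rule mult_mono)
      show "integral {a..x} (\<lambda>y. (u' y)^2) \<le> J" unfolding J_def
        using x by (intro integral_subset_le)
          (auto intro!: integrable_continuous_interval continuous_intros continuous_on_subset[OF u'])
      show "0 \<le> integral {a..x} (\<lambda>y. (u' y)^2)"
        by (rule integral_nonneg) (auto intro!: integrable_continuous_interval continuous_intros u'_x)
    qed (use x in auto)
    finally show ?thesis .
  qed
  have "integral {a..b} (\<lambda>x. (u x)^2) \<le> integral {a..b} (\<lambda>x. (b - a) * J)"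
    using pointwise
    by (intro integral_le) (auto intro!: integrable_continuous_interval continuous_intros u)
  also have "\<dots> = (b - a)^2 * J" using ab by (simp add: power2_eq_square)
  finally show ?thesis by (simp add: J_def)
qed

lemma integration_by_parts_vanishing:
  fixes u u' v v' :: "real \<Rightarrow> real"
  assumes ab: "a \<le> b"
    and du: "\<And>x. x \<in> {a..b} \<Longrightarrow> (u has_real_derivative u' x) (at x)"
    and dv: "\<And>x. x \<in> {a..b} \<Longrightarrow> (v has_real_derivative v' x) (at x)"
    and u': "continuous_on {a..b} u'" and v': "continuous_on {a..b} v'"
    and va: "v a = 0" and vb: "v b = 0"
  shows "integral {a..b} (\<lambda>x. u' x * v x) = - integral {a..b} (\<lambda>x. u x * v' x)"
proof -
  have u: "continuous_on {a..b} u"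
    by (rule DERIV_continuous_on) (use du in \<open>auto intro: has_field_derivative_at_within\<close>)
  have v: "continuous_on {a..b} v"
    by (rule DERIV_continuous_on) (use dv in \<open>auto intro: has_field_derivative_at_within\<close>)
  have uv': "((\<lambda>x. u x * v' x) has_integral integral {a..b} (\<lambda>x. u x * v' x)) {a..b}"
    by (intro integrable_integral integrable_continuous_interval continuous_intros u v')
  have "((\<lambda>x. u' x * v x) has_integral - integral {a..b} (\<lambda>x. u x * v' x)) {a..b}"
  proof (rule integration_by_parts[OF bounded_bilinear_mult ab u v])
    show "(u has_vector_derivative u' x) (at x)" "(v has_vector_derivative v' x) (at x)"
      if "x \<in> {a..b}" for x
      using du[OF that] dv[OF that] by (simp_all add: has_real_derivative_iff_has_vector_derivative)
  qed (use uv' va vb in simp)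
  then show ?thesis by (rule integral_unique)
qed

lemma integrable_on_dominated_continuous:
  fixes f g :: "'a::euclidean_space \<Rightarrow> real"
  assumes "continuous_on S f" "closed S" "g integrable_on S" "\<And>x. x \<in> S \<Longrightarrow> \<bar>f x\<bar> \<le> g x"
  shows "f integrable_on S"
proof (rule measurable_bounded_by_integrable_imp_integrable)
  show "S \<in> sets lebesgue" using assms(2) by (metis borel_closed sets_completionI_sets sets_lborel)
  then show "f \<in> borel_measurable (lebesgue_on S)"
    using assms(1) continuous_imp_measurable_on_sets_lebesgue by blast
qed (use assms in auto)

lemma integral_truncation:
  fixes f :: "real \<Rightarrow> real"
  assumes "continuous_on {a..} f"
  shows "(\<lambda>x. if x \<le> b then f x else 0) integrable_on {a..}"
    and "integral {a..} (\<lambda>x. if x \<le> b then f x else 0) = integral {a..b} f"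
proof -
  have trunc: "(\<lambda>x. if x \<le> b then f x else 0) = (\<lambda>x. if x \<in> {..b} then f x else 0)"
    by auto
  have "f integrable_on {a..b}"
    by (rule integrable_continuous_interval) (rule continuous_on_subset[OF assms], auto)
  then show "(\<lambda>x. if x \<le> b then f x else 0) integrable_on {a..}"
    unfolding trunc integrable_restrict_Int by (simp add: Int_commute atLeastAtMost_def)
  show "integral {a..} (\<lambda>x. if x \<le> b then f x else 0) = integral {a..b} f"
    unfolding trunc integral_restrict_Int by (simp add: Int_commute atLeastAtMost_def)
qed

lemma eventually_truncation_eq:
  "\<forall>\<^sub>F k in sequentially. (if x \<le> real k then f x else 0) = f x"
proof -
  obtain N :: nat where "x \<le> real N" using real_arch_simple by blast
  then show ?thesis
    unfolding eventually_sequentially by (intro exI[of _ N]) auto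
qed

lemma tendsto_integral_atLeastAtMost:
  fixes f g :: "real \<Rightarrow> real"
  assumes cont: "continuous_on {a..} f" and g: "g integrable_on {a..}"
    and bound: "\<And>x. x \<ge> a \<Longrightarrow> \<bar>f x\<bar> \<le> g x"
  shows "(\<lambda>n. integral {a..real n} f) \<longlonglongrightarrow> integral {a..} f"
proof -
  have "(\<lambda>n. integral {a..} (\<lambda>x. if x \<le> real n then f x else 0)) \<longlonglongrightarrow> integral {a..} f"
  proof (rule dominated_convergence(2)[OF integral_truncation(1)[OF cont] g])
    show "norm (if x \<le> real n then f x else 0) \<le> g x" if "x \<in> {a..}" for n x
      using bound[of x] that by auto
  qed (auto intro: tendsto_eventually eventually_truncation_eq)
  then show ?thesis by (simp add: integral_truncation(2)[OF cont])
qed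

lemma integrable_on_atLeast_nonneg_bounded:
  fixes f :: "real \<Rightarrow> real"
  assumes cont: "continuous_on {a..} f" and nonneg: "\<And>x. x \<ge> a \<Longrightarrow> f x \<ge> 0"
    and bounded: "\<And>n::nat. integral {a..real n} f \<le> C"
  shows "f integrable_on {a..}"
proof -
  have "bounded (range (\<lambda>n. integral {a..} (\<lambda>x. if x \<le> real n then f x else 0)))"
  proof -
    have "0 \<le> integral {a..real n} f" for n
      by (rule integral_nonneg)
        (auto intro!: integrable_continuous_interval continuous_on_subset[OF cont] nonneg)
    then have "\<bar>integral {a..real n} f\<bar> \<le> C" for n
      using bounded[of n] by simp
    then show ?thesis
      unfolding bounded_iff integral_truncation(2)[OF cont] by auto
  qed
  from monotone_convergence_increasing[OF integral_truncation(1)[OF cont] _ _ this]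
  show ?thesis
    using nonneg by (force intro: tendsto_eventually eventually_truncation_eq)
qed

lemma integration_by_parts_atLeast:
  fixes f f' g g' h1 h2 :: "real \<Rightarrow> real"
  assumes f: "continuous_on {a..} f" and g: "continuous_on {a..} g"
    and f': "continuous_on {a..} f'" and g': "continuous_on {a..} g'"
    and df: "\<And>x. x > a \<Longrightarrow> (f has_real_derivative f' x) (at x)"
    and dg: "\<And>x. x > a \<Longrightarrow> (g has_real_derivative g' x) (at x)"
    and h1: "h1 integrable_on {a..}" "\<And>x. x \<ge> a \<Longrightarrow> \<bar>f' x * g x\<bar> \<le> h1 x"
    and h2: "h2 integrable_on {a..}" "\<And>x. x \<ge> a \<Longrightarrow> \<bar>f x * g' x\<bar> \<le> h2 x"
    and lim: "(\<lambda>n. f (real n) * g (real n)) \<longlonglongrightarrow> L"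
  shows "integral {a..} (\<lambda>x. f' x * g x) = L - f a * g a - integral {a..} (\<lambda>x. f x * g' x)"
proof -
  have by_parts: "integral {a..T} (\<lambda>x. f' x * g x) = f T * g T - f a * g a - integral {a..T} (\<lambda>x. f x * g' x)"
    if T: "a \<le> T" for T
  proof -
    have sub: "{a..T} \<subseteq> {a..}" by auto
    have "((\<lambda>x. f x * g' x) has_integral integral {a..T} (\<lambda>x. f x * g' x)) {a..T}"
      by (intro integrable_integral integrable_continuous_interval continuous_on_mult
          continuous_on_subset[OF f sub] continuous_on_subset[OF g' sub])
    then have "((\<lambda>x. f' x * g x) has_integral
        f T * g T - f a * g a - integral {a..T} (\<lambda>x. f x * g' x)) {a..T}"
      using df dg
      by (intro integration_by_parts_interior[OF bounded_bilinear_mult T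
            continuous_on_subset[OF f sub] continuous_on_subset[OF g sub]])
        (auto simp: has_real_derivative_iff_has_vector_derivative)
    then show ?thesis by (rule integral_unique)
  qed
  have lhs: "(\<lambda>n. integral {a..real n} (\<lambda>x. f' x * g x)) \<longlonglongrightarrow> integral {a..} (\<lambda>x. f' x * g x)"
    by (rule tendsto_integral_atLeastAtMost[OF continuous_on_mult[OF f' g] h1])
  have "(\<lambda>n. integral {a..real n} (\<lambda>x. f x * g' x)) \<longlonglongrightarrow> integral {a..} (\<lambda>x. f x * g' x)"
    by (rule tendsto_integral_atLeastAtMost[OF continuous_on_mult[OF f g'] h2])
  then have rhs: "(\<lambda>n. f (real n) * g (real n) - f a * g a - integral {a..real n} (\<lambda>x. f x * g' x))
      \<longlonglongrightarrow> L - f a * g a - integral {a..} (\<lambda>x. f x * g' x)"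
    by (intro tendsto_diff tendsto_const lim)
  have "\<forall>\<^sub>F n in sequentially. a \<le> real n"
    using filterlim_real_sequentially by (simp add: filterlim_at_top)
  then have "\<forall>\<^sub>F n in sequentially. f (real n) * g (real n) - f a * g a -
      integral {a..real n} (\<lambda>x. f x * g' x) = integral {a..real n} (\<lambda>x. f' x * g x)"
    by eventually_elim (simp add: by_parts)
  from LIMSEQ_unique[OF lhs Lim_transform_eventually[OF rhs this]] show ?thesis .
qed

lemma has_real_derivative_integral_dominated:
  fixes f f' :: "real \<Rightarrow> real \<Rightarrow> real" and h :: "real \<Rightarrow> real"
  assumes r: "r > 0"
    and deriv: "\<And>\<tau> s. s \<in> S \<Longrightarrow> \<bar>\<tau> - t\<bar> < r \<Longrightarrow> ((\<lambda>\<tau>. f \<tau> s) has_real_derivative f' \<tau> s) (at \<tau>)"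
    and bound: "\<And>\<tau> s. s \<in> S \<Longrightarrow> \<bar>\<tau> - t\<bar> < r \<Longrightarrow> \<bar>f' \<tau> s\<bar> \<le> h s"
    and h: "h integrable_on S"
    and f: "\<And>\<tau>. \<bar>\<tau> - t\<bar> < r \<Longrightarrow> f \<tau> integrable_on S"
    and f': "f' t integrable_on S"
  shows "((\<lambda>\<tau>. integral S (f \<tau>)) has_real_derivative integral S (f' t)) (at t)"
  unfolding has_field_derivative_iff
proof (subst tendsto_at_iff_sequentially, intro allI impI)
  fix X :: "nat \<Rightarrow> real"
  assume X: "\<forall>i. X i \<in> UNIV - {t}" and Xt: "X \<longlonglongrightarrow> t"
  define q where "q = (\<lambda>k s. if \<bar>X k - t\<bar> < r then (f (X k) s - f t s) / (X k - t) else f' t s)"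
  have near: "\<forall>\<^sub>F k in sequentially. \<bar>X k - t\<bar> < r"
    using tendstoD[OF Xt r] by (simp add: dist_real_def)
  have q_integrable: "q k integrable_on S" for k
    using f[of "X k"] f[of t] f' r
    by (cases "\<bar>X k - t\<bar> < r") (auto simp: q_def intro!: integrable_on_divide integrable_diff)
  have q_bound: "norm (q k s) \<le> h s" if s: "s \<in> S" for k s
  proof (cases "\<bar>X k - t\<bar> < r")
    case True
    have "\<bar>f (X k) s - f t s\<bar> \<le> h s * \<bar>X k - t\<bar>"
      using field_differentiable_bound[of "ball t r" "\<lambda>\<tau>. f \<tau> s" "\<lambda>\<tau>. f' \<tau> s" "h s" "X k" t]
        deriv[OF s] bound[OF s] True r
      by (auto simp: dist_real_def abs_minus_commute has_field_derivative_at_within)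
    moreover have "X k \<noteq> t" using X by auto
    ultimately show ?thesis using True by (simp add: q_def abs_divide divide_le_eq)
  qed (use bound[OF s, of t] r in \<open>simp add: q_def\<close>)
  have q_tendsto: "(\<lambda>k. q k s) \<longlonglongrightarrow> f' t s" if s: "s \<in> S" for s
  proof -
    have "((\<lambda>y. (f y s - f t s) / (y - t)) \<longlongrightarrow> f' t s) (at t)"
      using deriv[OF s, of t] r by (simp add: has_field_derivative_iff)
    then have "(\<lambda>k. (f (X k) s - f t s) / (X k - t)) \<longlonglongrightarrow> f' t s"
      using X Xt by (subst (asm) tendsto_at_iff_sequentially) (auto simp: o_def)
    then show ?thesis
      by (rule Lim_transform_eventually) (use near in \<open>auto simp: q_def elim: eventually_mono\<close>)
  qed
  have "\<forall>\<^sub>F k in sequentially. integral S (q k) = (integral S (f (X k)) - integral S (f t)) / (X k - t)"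
    using near by eventually_elim (use f r in \<open>simp add: q_def integral_diff\<close>)
  with dominated_convergence(2)[OF q_integrable h q_bound q_tendsto]
  show "((\<lambda>y. (integral S (f y) - integral S (f t)) / (y - t)) \<circ> X) \<longlonglongrightarrow> integral S (f' t)"
    by (auto simp: o_def elim: Lim_transform_eventually)
qed

lemma tendsto_integral_inner_truncation:
  fixes f :: "real \<Rightarrow> real \<Rightarrow> real" and g :: "real \<Rightarrow> real"
  assumes ab: "a \<le> b"
    and cont: "continuous_on ({a..b} \<times> {c..}) (\<lambda>(x, \<sigma>). f x \<sigma>)"
    and g: "g integrable_on {c..}"
    and bound: "\<And>x \<sigma>. x \<in> {a..b} \<Longrightarrow> \<sigma> \<ge> c \<Longrightarrow> \<bar>f x \<sigma>\<bar> \<le> g \<sigma>"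
  shows "(\<lambda>n. integral {a..b} (\<lambda>x. integral {c..real n} (f x)))
    \<longlonglongrightarrow> integral {a..b} (\<lambda>x. integral {c..} (f x))"
proof (rule dominated_convergence(2))
  show "(\<lambda>x. integral {c..real n} (f x)) integrable_on {a..b}" for n
  proof (rule integrable_continuous_interval)
    have "continuous_on ({a..b} \<times> cbox c (real n)) (\<lambda>(x, \<sigma>). f x \<sigma>)"
      by (rule continuous_on_subset[OF cont]) auto
    from integral_continuous_on_param[OF this]
    show "continuous_on {a..b} (\<lambda>x. integral {c..real n} (f x))" by (simp add: cbox_interval)
  qed
  show "(\<lambda>x. integral {c..} g) integrable_on {a..b}" by (simp add: integrable_const_ivl)
  show "norm (integral {c..real n} (f x)) \<le> integral {c..} g" if x: "x \<in> {a..b}" for n x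
  proof -
    have g_n: "g integrable_on {c..real n}" by (rule integrable_on_subinterval[OF g]) auto
    have "\<bar>integral {c..real n} (f x)\<bar> \<le> integral {c..real n} g"
      unfolding real_norm_def[symmetric] using bound x continuous_on_section(1)[OF cont x] g_n
      by (intro integral_norm_bound_integral)
        (auto intro!: integrable_continuous_interval elim: continuous_on_subset)
    also have "\<dots> \<le> integral {c..} g"
      using order_trans[OF abs_ge_zero bound[of a]] ab by (intro integral_subset_le g_n g) auto
    finally show ?thesis by simp
  qed
  show "(\<lambda>n. integral {c..real n} (f x)) \<longlonglongrightarrow> integral {c..} (f x)" if "x \<in> {a..b}" for x
    using bound that
    by (intro tendsto_integral_atLeastAtMost[OF continuous_on_section(1)[OF cont that] g]) auto
qed

lemma integral_swap_atLeast:
  fixes f :: "real \<Rightarrow> real \<Rightarrow> real" and g :: "real \<Rightarrow> real"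
  assumes ab: "a \<le> b"
    and cont: "continuous_on ({a..b} \<times> {c..}) (\<lambda>(x, \<sigma>). f x \<sigma>)"
    and g: "g integrable_on {c..}"
    and bound: "\<And>x \<sigma>. x \<in> {a..b} \<Longrightarrow> \<sigma> \<ge> c \<Longrightarrow> \<bar>f x \<sigma>\<bar> \<le> g \<sigma>"
  shows "integral {a..b} (\<lambda>x. integral {c..} (f x)) = integral {c..} (\<lambda>\<sigma>. integral {a..b} (\<lambda>x. f x \<sigma>))"
proof -
  define F where "F = (\<lambda>\<sigma>. integral {a..b} (\<lambda>x. f x \<sigma>))"
  have truncated_swap: "integral {a..b} (\<lambda>x. integral {c..real n} (f x)) = integral {c..real n} F" for n
  proof -
    have "continuous_on (cbox (a, c) (b, real n)) (\<lambda>(x, \<sigma>). f x \<sigma>)"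
      by (rule continuous_on_subset[OF cont]) (auto simp: cbox_Pair_eq)
    from integral_swap_continuous[OF this] show ?thesis by (simp add: F_def cbox_interval)
  qed
  have F_cont: "continuous_on {c..} F"
  proof -
    have "continuous_on ({c..} \<times> {a..b}) (\<lambda>p. (\<lambda>(x, \<sigma>). f x \<sigma>) (snd p, fst p))"
      by (rule continuous_on_compose2[OF cont]) (auto intro!: continuous_intros)
    then show ?thesis
      using continuous_on_integral_interval[of "{c..}" a b "\<lambda>\<sigma> x. f x \<sigma>"] by (simp add: F_def)
  qed
  have F_bound: "\<bar>F \<sigma>\<bar> \<le> (b - a) * g \<sigma>" if "\<sigma> \<ge> c" for \<sigma>
    unfolding F_def using ab continuous_on_section(2)[OF cont] bound that
    by (intro abs_integral_interval_le) auto
  have "(\<lambda>n. integral {c..real n} F) \<longlonglongrightarrow> integral {c..} F"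
    by (rule tendsto_integral_atLeastAtMost[OF F_cont, of "\<lambda>\<sigma>. (b - a) * g \<sigma>"])
      (use integrable_on_mult_right[OF g] F_bound in auto)
  with tendsto_integral_inner_truncation[OF assms] show ?thesis
    unfolding truncated_swap F_def by (rule LIMSEQ_unique)
qed

section \<open>Exponentially decaying memory kernels\<close>

locale memory_kernel =
  fixes \<kappa> \<kappa>' :: "real \<Rightarrow> real" and \<delta> :: real
  assumes kernel_continuous: "continuous_on {0..} \<kappa>"
    and kernel_deriv: "\<And>s. s \<ge> 0 \<Longrightarrow> (\<kappa> has_real_derivative \<kappa>' s) (at s within {0..})"
    and kernel_deriv_continuous: "continuous_on {0..} \<kappa>'"
    and kernel_pos: "\<And>s. s \<ge> 0 \<Longrightarrow> \<kappa> s > 0"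
    and decay_rate_pos: "\<delta> > 0"
    and kernel_deriv_le: "\<And>s. s \<ge> 0 \<Longrightarrow> \<kappa>' s \<le> - \<delta> * \<kappa> s"
begin

lemma kernel_has_real_derivative: "s > 0 \<Longrightarrow> (\<kappa> has_real_derivative \<kappa>' s) (at s)"
  using kernel_deriv[of s] at_within_interior[of s "{0..}"] by simp

lemma kernel_deriv_nonpos: "s \<ge> 0 \<Longrightarrow> \<kappa>' s \<le> 0"
  using kernel_deriv_le[of s] mult_pos_pos[OF decay_rate_pos kernel_pos[of s]] by linarith

lemma kernel_antimono:
  assumes "0 \<le> a" "a \<le> b" shows "\<kappa> b \<le> \<kappa> a"
proof (rule DERIV_nonpos_imp_decreasing_open[OF assms(2)])
  show "\<exists>y. DERIV \<kappa> x :> y \<and> y \<le> 0" if "a < x" "x < b" for x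
    using kernel_has_real_derivative[of x] kernel_deriv_nonpos[of x] that assms by auto
  show "continuous_on {a..b} \<kappa>"
    by (rule continuous_on_subset[OF kernel_continuous]) (use assms in auto)
qed

lemma kernel_le_exp: assumes "s \<ge> 0" shows "\<kappa> s \<le> \<kappa> 0 * exp (- \<delta> * s)"
proof -
  define h where "h = (\<lambda>s. exp (\<delta> * s) * \<kappa> s)"
  have "h s \<le> h 0"
  proof (rule DERIV_nonpos_imp_decreasing_open[OF assms])
    fix x assume x: "0 < x" "x < s"
    have "DERIV h x :> exp (\<delta> * x) * (\<delta> * \<kappa> x + \<kappa>' x)"
      unfolding h_def using x
      by (auto intro!: derivative_eq_intros kernel_has_real_derivative simp: algebra_simps)
    moreover have "exp (\<delta> * x) * (\<delta> * \<kappa> x + \<kappa>' x) \<le> 0"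
      using kernel_deriv_le[of x] x by (intro mult_nonneg_nonpos) auto
    ultimately show "\<exists>y. DERIV h x :> y \<and> y \<le> 0" by blast
  qed (auto simp: h_def intro!: continuous_intros continuous_on_subset[OF kernel_continuous])
  then show ?thesis by (simp add: h_def exp_minus field_simps)
qed

lemma kernel_weight_le:
  assumes "s \<ge> 0"
  shows "\<kappa> s * (1 + s)^2 \<le> \<kappa> 0 * (1 + 4 / \<delta>)^2 * exp (- (\<delta> / 2) * s)"
proof -
  have "1 + \<delta> * s / 4 \<le> exp (\<delta> * s / 4)"
    by (rule exp_ge_add_one_self_aux) (use assms decay_rate_pos in auto)
  then have "s \<le> (4 / \<delta>) * exp (\<delta> * s / 4)"
    using decay_rate_pos by (simp add: field_simps)
  moreover have "1 \<le> exp (\<delta> * s / 4)" using assms decay_rate_pos by simp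
  ultimately have "1 + s \<le> exp (\<delta> * s / 4) + (4 / \<delta>) * exp (\<delta> * s / 4)"
    by linarith
  then have "1 + s \<le> (1 + 4 / \<delta>) * exp (\<delta> * s / 4)"
    by (simp add: distrib_right)
  then have "(1 + s)^2 \<le> ((1 + 4 / \<delta>) * exp (\<delta> * s / 4))^2"
    using assms by (intro power_mono) auto
  also have "\<dots> = (1 + 4 / \<delta>)^2 * exp (\<delta> * s / 2)"
    by (simp add: power_mult_distrib power2_eq_square flip: exp_add)
  finally have "\<kappa> s * (1 + s)^2 \<le> \<kappa> 0 * exp (- \<delta> * s) * ((1 + 4 / \<delta>)^2 * exp (\<delta> * s / 2))"
    using kernel_le_exp[OF assms] kernel_pos[of s] kernel_pos[of 0] assms
    by (intro mult_mono) auto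
  also have "\<dots> = \<kappa> 0 * (1 + 4 / \<delta>)^2 * exp (- (\<delta> / 2) * s)"
    by (simp add: mult_ac flip: exp_add)
  finally show ?thesis .
qed

lemma integrable_kernel_weight: "(\<lambda>s. \<kappa> s * (1 + s)^2) integrable_on {0..}"
proof (rule integrable_on_dominated_continuous)
  show "(\<lambda>s. \<kappa> 0 * (1 + 4 / \<delta>)^2 * exp (- (\<delta> / 2) * s)) integrable_on {0..}"
    using decay_rate_pos by (intro integrable_on_mult_right integrable_on_exp_minus_to_infinity) auto
qed (use kernel_weight_le kernel_pos in
      \<open>auto intro!: continuous_intros kernel_continuous simp: less_imp_le\<close>)

lemma kernel_weight_tendsto_0: "(\<lambda>n. \<kappa> (real n) * (1 + real n)^2) \<longlonglongrightarrow> 0"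
proof (rule Lim_null_comparison)
  have "(\<lambda>n. exp (- (\<delta> / 2)) ^ n) \<longlonglongrightarrow> 0"
    using decay_rate_pos by (intro LIMSEQ_realpow_zero) auto
  then have "(\<lambda>n. exp (- (\<delta> / 2) * real n)) \<longlonglongrightarrow> 0"
    by (simp add: exp_of_nat_mult[symmetric] mult.commute)
  then show "(\<lambda>n. \<kappa> 0 * (1 + 4 / \<delta>)^2 * exp (- (\<delta> / 2) * real n)) \<longlonglongrightarrow> 0"
    by (simp add: tendsto_mult_right_zero)
  show "\<forall>\<^sub>F n in sequentially. norm (\<kappa> (real n) * (1 + real n)^2)
      \<le> \<kappa> 0 * (1 + 4 / \<delta>)^2 * exp (- (\<delta> / 2) * real n)"
    using kernel_weight_le kernel_pos by (simp add: less_imp_le)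
qed

lemma abs_kernel_mult_le:
  "s \<ge> 0 \<Longrightarrow> \<bar>y\<bar> \<le> C * (1 + s)^2 \<Longrightarrow> \<bar>\<kappa> s * y\<bar> \<le> C * (\<kappa> s * (1 + s)^2)"
  using mult_left_mono[of "\<bar>y\<bar>" "C * (1 + s)^2" "\<kappa> s"] kernel_pos[of s]
  by (simp add: abs_mult mult_ac)

lemma integrable_kernel_mult:
  assumes "continuous_on {0..} f" "\<And>s. s \<ge> 0 \<Longrightarrow> \<bar>f s\<bar> \<le> C * (1 + s)^2"
  shows "(\<lambda>s. \<kappa> s * f s) integrable_on {0..}"
proof (rule integrable_on_dominated_continuous)
  show "(\<lambda>s. C * (\<kappa> s * (1 + s)^2)) integrable_on {0..}"
    by (rule integrable_on_mult_right[OF integrable_kernel_weight])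
qed (auto intro!: continuous_intros assms(1) kernel_continuous abs_kernel_mult_le assms(2))

lemma integrable_kernel: "\<kappa> integrable_on {0..}"
  using integrable_kernel_mult[of "\<lambda>_. 1" 1] by simp

lemma g0_pos: "g0 \<kappa> > 0"
proof -
  have "\<kappa> integrable_on {0..1}" by (rule integrable_on_subinterval[OF integrable_kernel]) auto
  then have "integral {0..1} (\<lambda>s::real. \<kappa> 1) \<le> integral {0..1} \<kappa>"
    by (intro integral_le) (auto simp: integrable_const_ivl kernel_antimono)
  also have "\<dots> \<le> g0 \<kappa>"
    unfolding g0_def using \<open>\<kappa> integrable_on {0..1}\<close> integrable_kernel kernel_pos
    by (intro integral_subset_le) (auto simp: less_imp_le)
  finally show ?thesis using kernel_pos[of 1] by simp
qed

lemma integral_kernel_deriv_weight_eq: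
  assumes T: "T \<ge> 0"
  shows "integral {0..T} (\<lambda>s. - \<kappa>' s * (1 + s)^2)
    = \<kappa> 0 + integral {0..T} (\<lambda>s. \<kappa> s * (2 * (1 + s))) - \<kappa> T * (1 + T)^2"
proof -
  have sub: "{0..T} \<subseteq> {0..}" by auto
  have weight: "((\<lambda>s. \<kappa> s * (2 * (1 + s))) has_integral
      integral {0..T} (\<lambda>s. \<kappa> s * (2 * (1 + s)))) {0..T}"
    by (intro integrable_integral integrable_continuous_interval continuous_intros
        continuous_on_subset[OF kernel_continuous sub])
  have "((\<lambda>s. \<kappa>' s * (1 + s)^2) has_integral
      \<kappa> T * (1 + T)^2 - \<kappa> 0 - integral {0..T} (\<lambda>s. \<kappa> s * (2 * (1 + s)))) {0..T}"
  proof (rule integration_by_parts_interior[OF bounded_bilinear_mult T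
        continuous_on_subset[OF kernel_continuous sub]])
    show "(\<kappa> has_vector_derivative \<kappa>' x) (at x)" if "x \<in> {0<..<T}" for x
      using kernel_has_real_derivative[of x] that
      by (simp add: has_real_derivative_iff_has_vector_derivative)
    show "((\<lambda>s. (1 + s)^2) has_vector_derivative 2 * (1 + x)) (at x)" for x
      unfolding has_real_derivative_iff_has_vector_derivative[symmetric]
      by (auto intro!: derivative_eq_intros)
  qed (use weight in \<open>auto intro!: continuous_intros\<close>)
  then show ?thesis by (simp add: integral_unique)
qed

lemma integrable_kernel_deriv_weight: "(\<lambda>s. - \<kappa>' s * (1 + s)^2) integrable_on {0..}"
proof (rule integrable_on_atLeast_nonneg_bounded)
  define C where "C = integral {0..} (\<lambda>s. \<kappa> s * (2 * (1 + s)))"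
  have "\<bar>2 * (1 + s)\<bar> \<le> 2 * (1 + s)^2" if "s \<ge> 0" for s :: real
    using self_le_power[of "1 + s" 2] that by simp
  then have weight: "(\<lambda>s. \<kappa> s * (2 * (1 + s))) integrable_on {0..}"
    by (intro integrable_kernel_mult continuous_intros)
  show "integral {0..real n} (\<lambda>s. - \<kappa>' s * (1 + s)^2) \<le> \<kappa> 0 + C" for n
  proof -
    have "integral {0..real n} (\<lambda>s. \<kappa> s * (2 * (1 + s))) \<le> C"
      unfolding C_def using weight kernel_pos
      by (intro integral_subset_le integrable_on_subinterval[OF weight])
        (auto intro!: mult_nonneg_nonneg simp: less_imp_le)
    moreover have "0 \<le> \<kappa> (real n) * (1 + real n)^2" using kernel_pos[of "real n"] by simp
    ultimately show ?thesis unfolding integral_kernel_deriv_weight_eq[OF of_nat_0_le_iff] by linarith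
  qed
qed (use kernel_deriv_nonpos in \<open>auto intro!: continuous_intros kernel_deriv_continuous
      simp: mult_nonpos_nonneg\<close>)

lemma abs_kernel_deriv_mult_le:
  "s \<ge> 0 \<Longrightarrow> \<bar>y\<bar> \<le> C * (1 + s)^2 \<Longrightarrow> \<bar>\<kappa>' s * y\<bar> \<le> C * (- \<kappa>' s * (1 + s)^2)"
  using mult_left_mono[of "\<bar>y\<bar>" "C * (1 + s)^2" "- \<kappa>' s"] kernel_deriv_nonpos[of s]
  by (simp add: abs_mult mult_ac)

lemma integrable_kernel_deriv_mult:
  assumes "continuous_on {0..} f" "\<And>s. s \<ge> 0 \<Longrightarrow> \<bar>f s\<bar> \<le> C * (1 + s)^2"
  shows "(\<lambda>s. \<kappa>' s * f s) integrable_on {0..}"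
proof (rule integrable_on_dominated_continuous)
  show "(\<lambda>s. C * (- \<kappa>' s * (1 + s)^2)) integrable_on {0..}"
    by (rule integrable_on_mult_right[OF integrable_kernel_deriv_weight])
  show "\<bar>\<kappa>' s * f s\<bar> \<le> C * (- \<kappa>' s * (1 + s)^2)" if "s \<in> {0..}" for s
    using that by (intro abs_kernel_deriv_mult_le assms(2)) auto
qed (auto intro!: continuous_intros assms(1) kernel_deriv_continuous)

lemma integrable_kernel_deriv: "\<kappa>' integrable_on {0..}"
  using integrable_kernel_deriv_mult[of "\<lambda>_. 1" 1] by simp

lemma integral_kernel_deriv_nonpos: "integral {0..} \<kappa>' \<le> 0"
  using integral_nonneg[OF integrable_neg[OF integrable_kernel_deriv]] kernel_deriv_nonpos by simp

definition F1_constant :: "real \<Rightarrow> real \<Rightarrow> real" where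
  "F1_constant c beta = beta^2 / (g0 \<kappa> * \<delta>) + 3 / \<delta> + c * pi^2 * (1 - integral {0..} \<kappa>') / (g0 \<kappa>)^2"

lemma F1_constant_pos: "c \<ge> 0 \<Longrightarrow> F1_constant c beta > 0"
  unfolding F1_constant_def using g0_pos decay_rate_pos integral_kernel_deriv_nonpos
  by (intro add_nonneg_pos add_pos_nonneg) auto

end

section \<open>Regular solutions\<close>

lemma C2fun_has_derivative:
  assumes "C2fun f"
  shows "((\<lambda>y. f y t) has_real_derivative dx f y t) (at y)"
    and "((\<lambda>\<tau>. f x \<tau>) has_real_derivative dt f x \<tau>) (at \<tau>)"
    and "((\<lambda>y. dx f y t) has_real_derivative dx (dx f) y t) (at y)"
    and "((\<lambda>\<tau>. dx f x \<tau>) has_real_derivative dt (dx f) x \<tau>) (at \<tau>)"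
  subgoal using assms unfolding C2fun_def dx_def by (simp add: DERIV_deriv_iff_real_differentiable)
  subgoal using assms unfolding C2fun_def dt_def by (simp add: DERIV_deriv_iff_real_differentiable)
  subgoal using assms unfolding C2fun_def
    by (simp add: DERIV_deriv_iff_real_differentiable dx_def[of "dx f"])
  subgoal using assms unfolding C2fun_def
    by (simp add: DERIV_deriv_iff_real_differentiable dt_def[of "dx f"])
  done

lemma C2fun_continuous:
  assumes "C2fun f"
  shows "continuous_on UNIV (\<lambda>(x, t). f x t)" "continuous_on UNIV (\<lambda>(x, t). dx f x t)"
    "continuous_on UNIV (\<lambda>(x, t). dt f x t)" "continuous_on UNIV (\<lambda>(x, t). dt (dx f) x t)"
  using assms unfolding C2fun_def by auto

lemma eta_regular_has_derivative:
  assumes "eta_regular eta"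
  shows "((\<lambda>y. eta y t s) has_real_derivative dx (slice eta s) y t) (at y)"
    and "((\<lambda>y. dx (slice eta s) y t) has_real_derivative dx (dx (slice eta s)) y t) (at y)"
    and "((\<lambda>\<tau>. eta x \<tau> s) has_real_derivative dt (slice eta s) x \<tau>) (at \<tau>)"
    and "((\<lambda>\<sigma>. eta x t \<sigma>) has_real_derivative ds eta x t \<sigma>) (at \<sigma>)"
proof -
  have "C2fun (slice eta s)" using assms unfolding eta_regular_def by auto
  from C2fun_has_derivative[OF this]
  show "((\<lambda>y. eta y t s) has_real_derivative dx (slice eta s) y t) (at y)"
    and "((\<lambda>y. dx (slice eta s) y t) has_real_derivative dx (dx (slice eta s)) y t) (at y)"
    and "((\<lambda>\<tau>. eta x \<tau> s) has_real_derivative dt (slice eta s) x \<tau>) (at \<tau>)"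
    by (simp_all add: slice_def)
  show "((\<lambda>\<sigma>. eta x t \<sigma>) has_real_derivative ds eta x t \<sigma>) (at \<sigma>)"
    using assms unfolding eta_regular_def ds_def by (simp add: DERIV_deriv_iff_real_differentiable)
qed

lemma eta_regular_continuous:
  assumes "eta_regular eta"
  shows "continuous_on UNIV (\<lambda>(x, t, s). eta x t s)"
    "continuous_on UNIV (\<lambda>(x, t, s). dx (slice eta s) x t)"
    "continuous_on UNIV (\<lambda>(x, t, s). dx (dx (slice eta s)) x t)"
    "continuous_on UNIV (\<lambda>(x, t, s). dt (slice eta s) x t)"
    "continuous_on UNIV (\<lambda>(x, t, s). ds eta x t s)"
  using assms unfolding eta_regular_def by auto

lemma bounded_on_rectangle:
  fixes f :: "real \<Rightarrow> real \<Rightarrow> real"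
  assumes "continuous_on UNIV (\<lambda>(x, y). f x y)"
  obtains C where "\<And>x y. x \<in> {a..b} \<Longrightarrow> y \<in> {c..d} \<Longrightarrow> \<bar>f x y\<bar> \<le> C"
proof -
  have "compact ((\<lambda>(x, y). f x y) ` ({a..b} \<times> {c..d}))"
    by (intro compact_continuous_image continuous_on_subset[OF assms] compact_Times) auto
  then obtain C where "\<forall>z \<in> (\<lambda>(x, y). f x y) ` ({a..b} \<times> {c..d}). norm z \<le> C"
    using compact_imp_bounded bounded_iff by metis
  then show ?thesis using that[of C] by force
qed

text \<open>A single constant dominating all fields on \<open>[0, \<pi>] \<times> [t - 1, t + 1]\<close>, with the linear
  growth in \<open>s\<close> allowed by \<open>eta_regular\<close>; it supplies the integrable majorants needed to
  differentiate \<open>F1\<close> at \<open>t\<close>.\<close>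

definition solution_bound :: "real \<Rightarrow> (real \<Rightarrow> real \<Rightarrow> real) \<Rightarrow> (real \<Rightarrow> real \<Rightarrow> real) \<Rightarrow>
    (real \<Rightarrow> real \<Rightarrow> real \<Rightarrow> real) \<Rightarrow> real \<Rightarrow> bool" where
  "solution_bound B phi theta eta t \<longleftrightarrow>
     (\<forall>x\<in>{0..pi}. \<forall>\<tau>\<in>{t-1..t+1}. \<forall>s\<ge>0.
        \<bar>theta x \<tau>\<bar> \<le> B * (1 + s) \<and> \<bar>dt theta x \<tau>\<bar> \<le> B * (1 + s) \<and>
        \<bar>dt phi x \<tau>\<bar> \<le> B * (1 + s) \<and> \<bar>eta x \<tau> s\<bar> \<le> B * (1 + s) \<and>
        \<bar>dx (slice eta s) x \<tau>\<bar> \<le> B * (1 + s) \<and> \<bar>dx (dx (slice eta s)) x \<tau>\<bar> \<le> B * (1 + s) \<and>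
        \<bar>dt (slice eta s) x \<tau>\<bar> \<le> B * (1 + s) \<and> \<bar>ds eta x \<tau> s\<bar> \<le> B * (1 + s))"

lemma solution_bound_exists:
  assumes theta: "C2fun theta" and phi: "C2fun phi" and eta: "eta_regular eta"
  shows "\<exists>B. solution_bound B phi theta eta t"
proof -
  obtain B\<^sub>\<eta> where B\<^sub>\<eta>: "\<forall>x\<in>{0..pi}. \<forall>\<tau>\<in>{t-1..t+1}. \<forall>s\<ge>0.
      \<bar>eta x \<tau> s\<bar> \<le> B\<^sub>\<eta> * (1 + s) \<and> \<bar>dx (slice eta s) x \<tau>\<bar> \<le> B\<^sub>\<eta> * (1 + s) \<and>
      \<bar>dx (dx (slice eta s)) x \<tau>\<bar> \<le> B\<^sub>\<eta> * (1 + s) \<and> \<bar>dt (slice eta s) x \<tau>\<bar> \<le> B\<^sub>\<eta> * (1 + s) \<and>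
      \<bar>ds eta x \<tau> s\<bar> \<le> B\<^sub>\<eta> * (1 + s)"
    using eta unfolding eta_regular_def by blast
  obtain C1 C2 C3 where
    C1: "\<And>x \<tau>. x \<in> {0..pi} \<Longrightarrow> \<tau> \<in> {t-1..t+1} \<Longrightarrow> \<bar>theta x \<tau>\<bar> \<le> C1" and
    C2: "\<And>x \<tau>. x \<in> {0..pi} \<Longrightarrow> \<tau> \<in> {t-1..t+1} \<Longrightarrow> \<bar>dt theta x \<tau>\<bar> \<le> C2" and
    C3: "\<And>x \<tau>. x \<in> {0..pi} \<Longrightarrow> \<tau> \<in> {t-1..t+1} \<Longrightarrow> \<bar>dt phi x \<tau>\<bar> \<le> C3"
    using bounded_on_rectangle[OF C2fun_continuous(1)[OF theta]]
      bounded_on_rectangle[OF C2fun_continuous(3)[OF theta]]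
      bounded_on_rectangle[OF C2fun_continuous(3)[OF phi]] by metis
  define B where "B = max B\<^sub>\<eta> (max C1 (max C2 C3))"
  have const: "\<bar>y\<bar> \<le> B * (1 + s)" if "\<bar>y\<bar> \<le> C" "C \<le> B" "s \<ge> 0" for y C s :: real
  proof -
    have "0 \<le> B * s" using that by (intro mult_nonneg_nonneg) linarith+
    moreover have "B * (1 + s) = B + B * s" by (simp add: distrib_left)
    ultimately show ?thesis using that by linarith
  qed
  have growth: "\<bar>y\<bar> \<le> B * (1 + s)" if "\<bar>y\<bar> \<le> B\<^sub>\<eta> * (1 + s)" "s \<ge> 0" for y s :: real
  proof -
    have "B\<^sub>\<eta> * (1 + s) \<le> B * (1 + s)" using that(2) by (intro mult_right_mono) (auto simp: B_def)
    with that(1) show ?thesis by linarith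
  qed
  show ?thesis
    unfolding solution_bound_def
  proof (intro exI[of _ B] ballI allI impI conjI)
    fix x \<tau> s :: real assume x: "x \<in> {0..pi}" and \<tau>: "\<tau> \<in> {t-1..t+1}" and s: "s \<ge> 0"
    have "C1 \<le> B" "C2 \<le> B" "C3 \<le> B" by (auto simp: B_def)
    then show "\<bar>theta x \<tau>\<bar> \<le> B * (1 + s)" "\<bar>dt theta x \<tau>\<bar> \<le> B * (1 + s)"
      "\<bar>dt phi x \<tau>\<bar> \<le> B * (1 + s)"
      using const[OF C1[OF x \<tau>] _ s] const[OF C2[OF x \<tau>] _ s] const[OF C3[OF x \<tau>] _ s] by auto
    show "\<bar>eta x \<tau> s\<bar> \<le> B * (1 + s)" "\<bar>dx (slice eta s) x \<tau>\<bar> \<le> B * (1 + s)"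
      "\<bar>dx (dx (slice eta s)) x \<tau>\<bar> \<le> B * (1 + s)" "\<bar>dt (slice eta s) x \<tau>\<bar> \<le> B * (1 + s)"
      "\<bar>ds eta x \<tau> s\<bar> \<le> B * (1 + s)"
      using B\<^sub>\<eta> x \<tau> s by (auto intro!: growth[OF _ s])
  qed
qed

lemma L2norm_square:
  "continuous_on {0..pi} f \<Longrightarrow> (L2norm f)^2 = integral {0..pi} (\<lambda>x. (f x)^2)"
  unfolding L2norm_def
  by (intro real_sqrt_pow2 integral_nonneg) (auto intro!: integrable_continuous_interval continuous_intros)

locale solution_at = memory_kernel +
  fixes rho J c mu b alpha xi beta :: real
    and u phi theta :: "real \<Rightarrow> real \<Rightarrow> real" and eta :: "real \<Rightarrow> real \<Rightarrow> real \<Rightarrow> real"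
    and t B :: real
  assumes c_pos: "c > 0"
    and solution: "is_solution rho J c mu b alpha xi beta \<kappa> u phi theta eta"
    and t_pos: "t > 0"
    and bounded: "solution_bound B phi theta eta t"
begin

lemma theta_C2: "C2fun theta" and phi_C2: "C2fun phi" and eta_reg: "eta_regular eta"
  using solution unfolding is_solution_def by auto

lemma heat_equation:
  "x \<in> {0<..<pi} \<Longrightarrow>
    c * dt theta x t = - beta * dt (dx phi) x t + integral {0..} (\<lambda>s. \<kappa> s * dx (dx (slice eta s)) x t)"
  using solution t_pos unfolding is_solution_def by auto

lemma history_equation:
  "x \<in> {0<..<pi} \<Longrightarrow> s > 0 \<Longrightarrow> dt (slice eta s) x t = theta x t - ds eta x t s"
  using solution t_pos unfolding is_solution_def by auto

lemma eta_boundary: "s \<ge> 0 \<Longrightarrow> eta 0 t s = 0" "s \<ge> 0 \<Longrightarrow> eta pi t s = 0"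
  and eta_initial: "x \<in> {0..pi} \<Longrightarrow> eta x t 0 = 0"
  using solution t_pos unfolding is_solution_def by auto

lemmas solution_continuous_intros [continuous_intros] =
  continuous_on_compose_curried2[OF C2fun_continuous(1)[OF theta_C2]]
  continuous_on_compose_curried2[OF C2fun_continuous(3)[OF theta_C2]]
  continuous_on_compose_curried2[OF C2fun_continuous(1)[OF phi_C2]]
  continuous_on_compose_curried2[OF C2fun_continuous(2)[OF phi_C2]]
  continuous_on_compose_curried2[OF C2fun_continuous(3)[OF phi_C2]]
  continuous_on_compose_curried2[OF C2fun_continuous(4)[OF phi_C2]]
  continuous_on_compose_curried3[OF eta_regular_continuous(1)[OF eta_reg]]
  continuous_on_compose_curried3[OF eta_regular_continuous(2)[OF eta_reg]]
  continuous_on_compose_curried3[OF eta_regular_continuous(3)[OF eta_reg]]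
  continuous_on_compose_curried3[OF eta_regular_continuous(4)[OF eta_reg]]
  continuous_on_compose_curried3[OF eta_regular_continuous(5)[OF eta_reg]]
  continuous_on_compose2[OF kernel_continuous]
  continuous_on_compose2[OF kernel_deriv_continuous]

lemma solution_bounds:
  assumes "x \<in> {0..pi}" "\<tau> \<in> {t-1..t+1}" "s \<ge> 0"
  shows "\<bar>theta x \<tau>\<bar> \<le> B * (1 + s)" "\<bar>dt theta x \<tau>\<bar> \<le> B * (1 + s)"
    "\<bar>dt phi x \<tau>\<bar> \<le> B * (1 + s)" "\<bar>eta x \<tau> s\<bar> \<le> B * (1 + s)"
    "\<bar>dx (slice eta s) x \<tau>\<bar> \<le> B * (1 + s)" "\<bar>dx (dx (slice eta s)) x \<tau>\<bar> \<le> B * (1 + s)"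
    "\<bar>dt (slice eta s) x \<tau>\<bar> \<le> B * (1 + s)" "\<bar>ds eta x \<tau> s\<bar> \<le> B * (1 + s)"
  using bounded assms unfolding solution_bound_def by auto

lemma t_in_window: "t \<in> {t-1..t+1}" by simp

lemma bound_nonneg: "B \<ge> 0"
  using solution_bounds(1)[of 0 t 0] abs_ge_zero[of "theta 0 t"] by simp

end

section \<open>The derivative of \<open>F1\<close>\<close>

context solution_at
begin

definition "theta_eta \<tau> s = integral {0..pi} (\<lambda>x. theta x \<tau> * eta x \<tau> s)"
definition "dtheta_eta \<tau> s = integral {0..pi} (\<lambda>x. dt theta x \<tau> * eta x \<tau> s)"
definition "theta_dteta \<tau> s = integral {0..pi} (\<lambda>x. theta x \<tau> * dt (slice eta s) x \<tau>)"
definition "theta_dseta s = integral {0..pi} (\<lambda>x. theta x t * ds eta x t s)"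

lemma theta_eta_has_derivative:
  "((\<lambda>\<tau>. theta_eta \<tau> s) has_real_derivative dtheta_eta \<tau> s + theta_dteta \<tau> s) (at \<tau>)"
proof -
  have "((\<lambda>\<tau>. theta_eta \<tau> s) has_real_derivative
      integral {0..pi} (\<lambda>x. dt theta x \<tau> * eta x \<tau> s + theta x \<tau> * dt (slice eta s) x \<tau>)) (at \<tau>)"
    unfolding theta_eta_def
  proof (rule has_real_derivative_integral_interval)
    show "((\<lambda>\<tau>. theta x \<tau> * eta x \<tau> s) has_real_derivative
        dt theta x \<tau> * eta x \<tau> s + theta x \<tau> * dt (slice eta s) x \<tau>) (at \<tau>)" for x \<tau>
      using DERIV_mult'[OF C2fun_has_derivative(2)[OF theta_C2] eta_regular_has_derivative(3)[OF eta_reg]]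
      by (simp add: add.commute)
  qed (intro continuous_intros)+
  then show ?thesis
    unfolding dtheta_eta_def theta_dteta_def
    by (subst (asm) integral_add) (auto intro!: integrable_continuous_interval continuous_intros)
qed

lemma theta_eta_has_derivative_s:
  "((\<lambda>s. theta_eta t s) has_real_derivative theta_dseta s) (at s)"
  unfolding theta_eta_def theta_dseta_def
proof (rule has_real_derivative_integral_interval)
  show "((\<lambda>s. theta x t * eta x t s) has_real_derivative theta x t * ds eta x t s) (at s)" for x s
    by (rule DERIV_cmult[OF eta_regular_has_derivative(4)[OF eta_reg]])
qed (intro continuous_intros)+

lemma theta_eta_initial: "theta_eta t 0 = 0"
proof -
  have "theta_eta t 0 = integral {0..pi} (\<lambda>x. 0)"
    unfolding theta_eta_def by (rule integral_cong) (simp add: eta_initial)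
  then show ?thesis by simp
qed

lemma theta_eta_continuous: "continuous_on {0..} (theta_eta \<tau>)"
  unfolding theta_eta_def[abs_def] by (intro continuous_on_integral_interval continuous_intros)

lemma dtheta_eta_continuous: "continuous_on {0..} (dtheta_eta \<tau>)"
  unfolding dtheta_eta_def[abs_def] by (intro continuous_on_integral_interval continuous_intros)

lemma theta_dteta_continuous: "continuous_on {0..} (theta_dteta \<tau>)"
  unfolding theta_dteta_def[abs_def] by (intro continuous_on_integral_interval continuous_intros)

lemma theta_dseta_continuous: "continuous_on {0..} theta_dseta"
  unfolding theta_dseta_def[abs_def] by (intro continuous_on_integral_interval continuous_intros)

lemma theta_eta_bound: "\<tau> \<in> {t-1..t+1} \<Longrightarrow> s \<ge> 0 \<Longrightarrow> \<bar>theta_eta \<tau> s\<bar> \<le> pi * B^2 * (1 + s)^2"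
  unfolding theta_eta_def by (intro abs_integral_0_pi_mult_le continuous_intros solution_bounds)

lemma dtheta_eta_bound: "\<tau> \<in> {t-1..t+1} \<Longrightarrow> s \<ge> 0 \<Longrightarrow> \<bar>dtheta_eta \<tau> s\<bar> \<le> pi * B^2 * (1 + s)^2"
  unfolding dtheta_eta_def by (intro abs_integral_0_pi_mult_le continuous_intros solution_bounds)

lemma theta_dteta_bound: "\<tau> \<in> {t-1..t+1} \<Longrightarrow> s \<ge> 0 \<Longrightarrow> \<bar>theta_dteta \<tau> s\<bar> \<le> pi * B^2 * (1 + s)^2"
  unfolding theta_dteta_def by (intro abs_integral_0_pi_mult_le continuous_intros solution_bounds)

lemma theta_dseta_bound: "s \<ge> 0 \<Longrightarrow> \<bar>theta_dseta s\<bar> \<le> pi * B^2 * (1 + s)^2"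
  unfolding theta_dseta_def by (intro abs_integral_0_pi_mult_le continuous_intros solution_bounds t_in_window)

lemma theta_eta_deriv_bound:
  assumes "\<tau> \<in> {t-1..t+1}" "s \<ge> 0"
  shows "\<bar>dtheta_eta \<tau> s + theta_dteta \<tau> s\<bar> \<le> (2 * pi * B^2) * (1 + s)^2"
  using dtheta_eta_bound[OF assms] theta_dteta_bound[OF assms] by linarith

lemma F1_has_derivative:
  "(F1 c \<kappa> theta eta has_real_derivative
      - (2 * c / g0 \<kappa>) * integral {0..} (\<lambda>s. \<kappa> s * (dtheta_eta t s + theta_dteta t s))) (at t)"
proof -
  have F1: "F1 c \<kappa> theta eta = (\<lambda>\<tau>. - (2 * c / g0 \<kappa>) * integral {0..} (\<lambda>s. \<kappa> s * theta_eta \<tau> s))"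
    by (simp add: fun_eq_iff F1_def L2ip_def theta_eta_def)
  have near: "\<tau> \<in> {t-1..t+1}" if "\<bar>\<tau> - t\<bar> < 1" for \<tau>
    using that by (simp add: abs_less_iff)
  have "((\<lambda>\<tau>. integral {0..} (\<lambda>s. \<kappa> s * theta_eta \<tau> s)) has_real_derivative
      integral {0..} (\<lambda>s. \<kappa> s * (dtheta_eta t s + theta_dteta t s))) (at t)"
  proof (rule has_real_derivative_integral_dominated[where r = 1 and h = "\<lambda>s. (2 * pi * B^2) * (\<kappa> s * (1 + s)^2)"])
    show "((\<lambda>\<tau>. \<kappa> s * theta_eta \<tau> s) has_real_derivative \<kappa> s * (dtheta_eta \<tau> s + theta_dteta \<tau> s)) (at \<tau>)"
      for \<tau> s by (rule DERIV_cmult[OF theta_eta_has_derivative])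
    show "\<bar>\<kappa> s * (dtheta_eta \<tau> s + theta_dteta \<tau> s)\<bar> \<le> (2 * pi * B^2) * (\<kappa> s * (1 + s)^2)"
      if "s \<in> {0..}" "\<bar>\<tau> - t\<bar> < 1" for \<tau> s
      using that by (intro abs_kernel_mult_le theta_eta_deriv_bound[OF near[OF that(2)]]) auto
    show "(\<lambda>s. (2 * pi * B^2) * (\<kappa> s * (1 + s)^2)) integrable_on {0..}"
      by (rule integrable_on_mult_right[OF integrable_kernel_weight])
    show "(\<lambda>s. \<kappa> s * theta_eta \<tau> s) integrable_on {0..}" if "\<bar>\<tau> - t\<bar> < 1" for \<tau>
      by (rule integrable_kernel_mult[OF theta_eta_continuous theta_eta_bound[OF near[OF that]]])
    show "(\<lambda>s. \<kappa> s * (dtheta_eta t s + theta_dteta t s)) integrable_on {0..}"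
      by (rule integrable_kernel_mult[OF continuous_on_add[OF dtheta_eta_continuous theta_dteta_continuous]
            theta_eta_deriv_bound[OF t_in_window]])
  qed simp
  then show ?thesis unfolding F1 by (rule DERIV_cmult)
qed

definition "theta_sq = integral {0..pi} (\<lambda>x. (theta x t)^2)"

lemma theta_dteta_eq: "s > 0 \<Longrightarrow> theta_dteta t s = theta_sq - theta_dseta s"
proof -
  assume s: "s > 0"
  have "theta_dteta t s = integral {0..pi} (\<lambda>x. (theta x t)^2 - theta x t * ds eta x t s)"
    unfolding theta_dteta_def
  proof (rule integral_spike[of "{0, pi}"])
    show "(theta x t)^2 - theta x t * ds eta x t s = theta x t * dt (slice eta s) x t"
      if "x \<in> {0..pi} - {0, pi}" for x
      using history_equation[of x s] s that by (simp add: power2_eq_square right_diff_distrib)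
  qed simp
  also have "\<dots> = theta_sq - theta_dseta s"
    unfolding theta_sq_def theta_dseta_def
    by (rule integral_diff) (auto intro!: integrable_continuous_interval continuous_intros)
  finally show ?thesis .
qed

lemma kernel_theta_dseta_by_parts:
  "integral {0..} (\<lambda>s. \<kappa> s * theta_dseta s) = - integral {0..} (\<lambda>s. \<kappa>' s * theta_eta t s)"
proof -
  have bound: "\<bar>theta_eta t s\<bar> \<le> (pi * B^2) * (1 + s)^2" if "s \<ge> 0" for s
    using theta_eta_bound[OF t_in_window that] by simp
  have lim: "(\<lambda>n. \<kappa> (real n) * theta_eta t (real n)) \<longlonglongrightarrow> 0"
  proof (rule Lim_null_comparison)
    show "\<forall>\<^sub>F n in sequentially. norm (\<kappa> (real n) * theta_eta t (real n))
        \<le> (pi * B^2) * (\<kappa> (real n) * (1 + real n)^2)"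
      using abs_kernel_mult_le[OF _ bound] by simp
    show "(\<lambda>n. (pi * B^2) * (\<kappa> (real n) * (1 + real n)^2)) \<longlonglongrightarrow> 0"
      using tendsto_mult_right_zero[OF kernel_weight_tendsto_0] by simp
  qed
  have "integral {0..} (\<lambda>s. \<kappa>' s * theta_eta t s)
      = 0 - \<kappa> 0 * theta_eta t 0 - integral {0..} (\<lambda>s. \<kappa> s * theta_dseta s)"
  proof (rule integration_by_parts_atLeast[OF kernel_continuous theta_eta_continuous
        kernel_deriv_continuous theta_dseta_continuous kernel_has_real_derivative
        theta_eta_has_derivative_s
        integrable_on_mult_right[OF integrable_kernel_deriv_weight] _
        integrable_on_mult_right[OF integrable_kernel_weight] _ lim])
    show "\<bar>\<kappa>' s * theta_eta t s\<bar> \<le> (pi * B^2) * (- \<kappa>' s * (1 + s)^2)" if "s \<ge> 0" for s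
      by (rule abs_kernel_deriv_mult_le[OF that bound[OF that]])
    show "\<bar>\<kappa> s * theta_dseta s\<bar> \<le> (pi * B^2) * (\<kappa> s * (1 + s)^2)" if "s \<ge> 0" for s
      by (rule abs_kernel_mult_le[OF that theta_dseta_bound[OF that]])
  qed
  then show ?thesis by (simp add: theta_eta_initial)
qed

definition "dphi_dxeta s = integral {0..pi} (\<lambda>x. dt phi x t * dx (slice eta s) x t)"
definition "dxeta_dxeta \<sigma> s = integral {0..pi} (\<lambda>x. dx (slice eta \<sigma>) x t * dx (slice eta s) x t)"
definition "memory_dxeta s = integral {0..} (\<lambda>\<sigma>. \<kappa> \<sigma> * dxeta_dxeta \<sigma> s)"

text \<open>Only \<open>dt (dx phi)\<close> is given by the heat equation, so the spatial integration by parts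
  is done at every time and the resulting identity is differentiated in time.\<close>

lemma dt_dx_phi_eta_eq:
  assumes s: "s \<ge> 0"
  shows "integral {0..pi} (\<lambda>x. dt (dx phi) x t * eta x t s) = - dphi_dxeta s"
proof -
  have by_parts: "integral {0..pi} (\<lambda>x. dx phi x \<tau> * eta x t s)
      = - integral {0..pi} (\<lambda>x. phi x \<tau> * dx (slice eta s) x t)" for \<tau>
    using C2fun_has_derivative(1)[OF phi_C2] eta_regular_has_derivative(1)[OF eta_reg]
      eta_boundary[OF s]
    by (intro integration_by_parts_vanishing continuous_intros) auto
  have "((\<lambda>\<tau>. integral {0..pi} (\<lambda>x. dx phi x \<tau> * eta x t s)) has_real_derivative
      integral {0..pi} (\<lambda>x. dt (dx phi) x t * eta x t s)) (at t)"
    by (rule has_real_derivative_integral_interval)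
      (auto intro!: continuous_intros DERIV_cmult_right C2fun_has_derivative(4)[OF phi_C2])
  moreover have "((\<lambda>\<tau>. - integral {0..pi} (\<lambda>x. phi x \<tau> * dx (slice eta s) x t)) has_real_derivative
      - dphi_dxeta s) (at t)"
    unfolding dphi_dxeta_def
    by (intro DERIV_minus has_real_derivative_integral_interval)
      (auto intro!: continuous_intros DERIV_cmult_right C2fun_has_derivative(2)[OF phi_C2])
  ultimately show ?thesis
    unfolding by_parts by (rule DERIV_unique)
qed

lemma memory_term_eq:
  assumes s: "s \<ge> 0"
  shows "integral {0..pi} (\<lambda>x. integral {0..} (\<lambda>\<sigma>. \<kappa> \<sigma> * dx (dx (slice eta \<sigma>)) x t) * eta x t s)
    = - memory_dxeta s"
proof -
  have "integral {0..pi} (\<lambda>x. integral {0..} (\<lambda>\<sigma>. \<kappa> \<sigma> * dx (dx (slice eta \<sigma>)) x t) * eta x t s)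
      = integral {0..pi} (\<lambda>x. integral {0..} (\<lambda>\<sigma>. \<kappa> \<sigma> * dx (dx (slice eta \<sigma>)) x t * eta x t s))"
    by simp
  also have "\<dots> = integral {0..} (\<lambda>\<sigma>. integral {0..pi} (\<lambda>x. \<kappa> \<sigma> * dx (dx (slice eta \<sigma>)) x t * eta x t s))"
  proof (rule integral_swap_atLeast[where g = "\<lambda>\<sigma>. (B * (B * (1 + s))) * (\<kappa> \<sigma> * (1 + \<sigma>)^2)"])
    show "continuous_on ({0..pi} \<times> {0..}) (\<lambda>(x, \<sigma>). \<kappa> \<sigma> * dx (dx (slice eta \<sigma>)) x t * eta x t s)"
      unfolding split_beta by (intro continuous_intros) auto
    show "(\<lambda>\<sigma>. (B * (B * (1 + s))) * (\<kappa> \<sigma> * (1 + \<sigma>)^2)) integrable_on {0..}"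
      by (rule integrable_on_mult_right[OF integrable_kernel_weight])
    show "\<bar>\<kappa> \<sigma> * dx (dx (slice eta \<sigma>)) x t * eta x t s\<bar> \<le> (B * (B * (1 + s))) * (\<kappa> \<sigma> * (1 + \<sigma>)^2)"
      if "x \<in> {0..pi}" "\<sigma> \<ge> 0" for x \<sigma>
    proof -
      have "\<bar>dx (dx (slice eta \<sigma>)) x t * eta x t s\<bar> \<le> (B * (1 + \<sigma>)) * (B * (1 + s))"
        unfolding abs_mult using solution_bounds[OF that(1) t_in_window] that s bound_nonneg
        by (intro mult_mono) auto
      also have "\<dots> \<le> (B * (B * (1 + s))) * (1 + \<sigma>)^2"
        using self_le_power[of "1 + \<sigma>" 2] that s bound_nonneg
        by (auto simp: mult_ac intro!: mult_left_mono mult_nonneg_nonneg)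
      finally have "\<bar>dx (dx (slice eta \<sigma>)) x t * eta x t s\<bar> \<le> (B * (B * (1 + s))) * (1 + \<sigma>)^2" .
      from abs_kernel_mult_le[OF that(2) this] show ?thesis by (simp add: mult.assoc)
    qed
  qed simp
  also have "\<dots> = integral {0..} (\<lambda>\<sigma>. - (\<kappa> \<sigma> * dxeta_dxeta \<sigma> s))"
  proof (rule integral_cong)
    fix \<sigma> :: real
    have "integral {0..pi} (\<lambda>x. dx (dx (slice eta \<sigma>)) x t * eta x t s) = - dxeta_dxeta \<sigma> s"
      unfolding dxeta_dxeta_def
      using eta_regular_has_derivative(1,2)[OF eta_reg] eta_boundary[OF s]
      by (intro integration_by_parts_vanishing continuous_intros) auto
    then show "integral {0..pi} (\<lambda>x. \<kappa> \<sigma> * dx (dx (slice eta \<sigma>)) x t * eta x t s)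
        = - (\<kappa> \<sigma> * dxeta_dxeta \<sigma> s)"
      by (simp add: mult.assoc)
  qed
  finally show ?thesis by (simp add: memory_dxeta_def)
qed

lemma c_dtheta_eta_eq:
  assumes s: "s \<ge> 0"
  shows "c * dtheta_eta t s = beta * dphi_dxeta s - memory_dxeta s"
proof -
  have "- memory_dxeta s
      = integral {0..pi} (\<lambda>x. c * (dt theta x t * eta x t s) + beta * (dt (dx phi) x t * eta x t s))"
    unfolding memory_term_eq[OF s, symmetric]
  proof (rule integral_spike[of "{0, pi}"])
    show "c * (dt theta x t * eta x t s) + beta * (dt (dx phi) x t * eta x t s)
        = integral {0..} (\<lambda>\<sigma>. \<kappa> \<sigma> * dx (dx (slice eta \<sigma>)) x t) * eta x t s"
      if "x \<in> {0..pi} - {0, pi}" for x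
    proof -
      have "x \<in> {0<..<pi}" using that by auto
      then have "integral {0..} (\<lambda>\<sigma>. \<kappa> \<sigma> * dx (dx (slice eta \<sigma>)) x t)
          = c * dt theta x t + beta * dt (dx phi) x t"
        using heat_equation[of x] by simp
      then show ?thesis by (simp add: algebra_simps)
    qed
  qed simp
  also have "\<dots> = c * dtheta_eta t s + beta * (- dphi_dxeta s)"
    unfolding dtheta_eta_def dt_dx_phi_eta_eq[OF s, symmetric]
    by (subst integral_add) (auto intro!: integrable_continuous_interval continuous_intros)
  finally show ?thesis by simp
qed

definition "dphi_sq = integral {0..pi} (\<lambda>x. (dt phi x t)^2)"
definition "dxeta_sq s = integral {0..pi} (\<lambda>x. (dx (slice eta s) x t)^2)"
definition "memory_norm = integral {0..} (\<lambda>s. \<kappa> s * dxeta_sq s)"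
definition "memory_dissipation = - integral {0..} (\<lambda>s. \<kappa>' s * dxeta_sq s)"

lemma dphi_dxeta_continuous: "continuous_on {0..} dphi_dxeta"
  unfolding dphi_dxeta_def[abs_def] by (intro continuous_on_integral_interval continuous_intros)

lemma dxeta_sq_continuous: "continuous_on {0..} dxeta_sq"
  unfolding dxeta_sq_def[abs_def] by (intro continuous_on_integral_interval continuous_intros)

lemma dxeta_dxeta_continuous: "continuous_on {0..} (\<lambda>\<sigma>. dxeta_dxeta \<sigma> s)"
  unfolding dxeta_dxeta_def by (intro continuous_on_integral_interval continuous_intros)

lemma dphi_dxeta_bound: "s \<ge> 0 \<Longrightarrow> \<bar>dphi_dxeta s\<bar> \<le> pi * B^2 * (1 + s)^2"
  unfolding dphi_dxeta_def by (intro abs_integral_0_pi_mult_le continuous_intros solution_bounds t_in_window)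

lemma dxeta_sq_bound: "s \<ge> 0 \<Longrightarrow> \<bar>dxeta_sq s\<bar> \<le> pi * B^2 * (1 + s)^2"
  unfolding dxeta_sq_def power2_eq_square[of "dx (slice eta s) _ t"]
  by (intro abs_integral_0_pi_mult_le continuous_intros solution_bounds t_in_window)

lemma dxeta_dxeta_bound:
  assumes "\<sigma> \<ge> 0" "s \<ge> 0"
  shows "\<bar>dxeta_dxeta \<sigma> s\<bar> \<le> (pi * B^2 * (1 + s)^2) * (1 + \<sigma>)^2"
proof -
  have "\<bar>dx (slice eta r) x t\<bar> \<le> B * ((1 + \<sigma>) * (1 + s))" if "r \<in> {\<sigma>, s}" "x \<in> {0..pi}" for r x
  proof -
    have "B * (1 + r) \<le> B * ((1 + \<sigma>) * (1 + s))"
      using that assms bound_nonneg by (intro mult_left_mono) (auto simp: algebra_simps)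
    with solution_bounds(5)[OF that(2) t_in_window, of r] that(1) assms show ?thesis by auto
  qed
  then have "\<bar>dxeta_dxeta \<sigma> s\<bar> \<le> pi * B^2 * ((1 + \<sigma>) * (1 + s))^2"
    unfolding dxeta_dxeta_def by (intro abs_integral_0_pi_mult_le continuous_intros) auto
  then show ?thesis by (simp add: power_mult_distrib mult_ac)
qed

lemma dxeta_sq_nonneg: "dxeta_sq s \<ge> 0"
  unfolding dxeta_sq_def
  by (rule integral_nonneg) (auto intro!: integrable_continuous_interval continuous_intros)

lemma integrable_kernel_dtheta_eta: "(\<lambda>s. \<kappa> s * dtheta_eta t s) integrable_on {0..}"
  by (rule integrable_kernel_mult[OF dtheta_eta_continuous dtheta_eta_bound[OF t_in_window]])

lemma integrable_kernel_theta_dteta: "(\<lambda>s. \<kappa> s * theta_dteta t s) integrable_on {0..}"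
  by (rule integrable_kernel_mult[OF theta_dteta_continuous theta_dteta_bound[OF t_in_window]])

lemma integrable_kernel_theta_dseta: "(\<lambda>s. \<kappa> s * theta_dseta s) integrable_on {0..}"
  by (rule integrable_kernel_mult[OF theta_dseta_continuous theta_dseta_bound])

lemma integrable_kernel_dphi_dxeta: "(\<lambda>s. \<kappa> s * dphi_dxeta s) integrable_on {0..}"
  by (rule integrable_kernel_mult[OF dphi_dxeta_continuous dphi_dxeta_bound])

lemma integrable_kernel_dxeta_sq: "(\<lambda>s. \<kappa> s * dxeta_sq s) integrable_on {0..}"
  by (rule integrable_kernel_mult[OF dxeta_sq_continuous dxeta_sq_bound])

lemma integrable_kernel_deriv_dxeta_sq: "(\<lambda>s. \<kappa>' s * dxeta_sq s) integrable_on {0..}"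
  by (rule integrable_kernel_deriv_mult[OF dxeta_sq_continuous dxeta_sq_bound])

lemma integrable_kernel_dxeta_dxeta: "s \<ge> 0 \<Longrightarrow> (\<lambda>\<sigma>. \<kappa> \<sigma> * dxeta_dxeta \<sigma> s) integrable_on {0..}"
  by (rule integrable_kernel_mult[OF dxeta_dxeta_continuous dxeta_dxeta_bound])

lemma integrable_kernel_memory_dxeta: "(\<lambda>s. \<kappa> s * memory_dxeta s) integrable_on {0..}"
proof (rule integrable_eq)
  show "(\<lambda>s. beta * (\<kappa> s * dphi_dxeta s) - c * (\<kappa> s * dtheta_eta t s)) integrable_on {0..}"
    by (intro integrable_diff integrable_on_mult_right integrable_kernel_dphi_dxeta
        integrable_kernel_dtheta_eta)
  show "beta * (\<kappa> s * dphi_dxeta s) - c * (\<kappa> s * dtheta_eta t s) = \<kappa> s * memory_dxeta s"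
    if "s \<in> {0..}" for s
  proof -
    have "memory_dxeta s = beta * dphi_dxeta s - c * dtheta_eta t s"
      using c_dtheta_eta_eq[of s] that by simp
    then show ?thesis by (simp only: right_diff_distrib mult.left_commute)
  qed
qed

lemma integrable_kernel_deriv_theta_eta: "(\<lambda>s. \<kappa>' s * theta_eta t s) integrable_on {0..}"
  by (rule integrable_kernel_deriv_mult[OF theta_eta_continuous theta_eta_bound[OF t_in_window]])

lemma integral_kernel_theta_dteta:
  "integral {0..} (\<lambda>s. \<kappa> s * theta_dteta t s)
    = g0 \<kappa> * theta_sq + integral {0..} (\<lambda>s. \<kappa>' s * theta_eta t s)"
proof -
  have "integral {0..} (\<lambda>s. \<kappa> s * theta_dteta t s)
      = integral {0..} (\<lambda>s. \<kappa> s * theta_sq - \<kappa> s * theta_dseta s)"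
    by (rule integral_spike[of "{0}"]) (auto simp: theta_dteta_eq right_diff_distrib)
  also have "\<dots> = g0 \<kappa> * theta_sq + integral {0..} (\<lambda>s. \<kappa>' s * theta_eta t s)"
    using integral_diff[OF integrable_on_mult_left[OF integrable_kernel] integrable_kernel_theta_dseta]
    by (simp add: g0_def kernel_theta_dseta_by_parts)
  finally show ?thesis .
qed

lemma integral_kernel_dtheta_eta:
  "c * integral {0..} (\<lambda>s. \<kappa> s * dtheta_eta t s)
    = beta * integral {0..} (\<lambda>s. \<kappa> s * dphi_dxeta s) - integral {0..} (\<lambda>s. \<kappa> s * memory_dxeta s)"
proof -
  have "c * integral {0..} (\<lambda>s. \<kappa> s * dtheta_eta t s)
      = integral {0..} (\<lambda>s. beta * (\<kappa> s * dphi_dxeta s) - \<kappa> s * memory_dxeta s)"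
    by (subst integral_mult_right[symmetric], rule integral_cong)
      (simp add: mult.left_commute[of c] mult.left_commute[of beta] c_dtheta_eta_eq right_diff_distrib)
  also have "\<dots> = beta * integral {0..} (\<lambda>s. \<kappa> s * dphi_dxeta s) - integral {0..} (\<lambda>s. \<kappa> s * memory_dxeta s)"
    by (simp add: integral_diff integrable_on_mult_right integrable_kernel_dphi_dxeta
        integrable_kernel_memory_dxeta)
  finally show ?thesis .
qed

lemma F1_derivative_eq:
  "- (2 * c / g0 \<kappa>) * integral {0..} (\<lambda>s. \<kappa> s * (dtheta_eta t s + theta_dteta t s))
    = - 2 * c * theta_sq - (2 * beta / g0 \<kappa>) * integral {0..} (\<lambda>s. \<kappa> s * dphi_dxeta s)
      + (2 / g0 \<kappa>) * integral {0..} (\<lambda>s. \<kappa> s * memory_dxeta s)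
      - (2 * c / g0 \<kappa>) * integral {0..} (\<lambda>s. \<kappa>' s * theta_eta t s)"
proof -
  have "integral {0..} (\<lambda>s. \<kappa> s * (dtheta_eta t s + theta_dteta t s))
      = integral {0..} (\<lambda>s. \<kappa> s * dtheta_eta t s) + integral {0..} (\<lambda>s. \<kappa> s * theta_dteta t s)"
    using integral_add[OF integrable_kernel_dtheta_eta integrable_kernel_theta_dteta]
    by (simp add: distrib_left)
  then have "- (2 * c / g0 \<kappa>) * integral {0..} (\<lambda>s. \<kappa> s * (dtheta_eta t s + theta_dteta t s))
      = - (2 / g0 \<kappa>) * (c * integral {0..} (\<lambda>s. \<kappa> s * dtheta_eta t s)) - 2 * c * theta_sq
        - (2 * c / g0 \<kappa>) * integral {0..} (\<lambda>s. \<kappa>' s * theta_eta t s)"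
    unfolding integral_kernel_theta_dteta using g0_pos by (simp add: field_simps)
  then show ?thesis
    unfolding integral_kernel_dtheta_eta by (simp add: algebra_simps)
qed

lemma theta_sq_nonneg: "theta_sq \<ge> 0"
  unfolding theta_sq_def
  by (auto intro!: integral_nonneg integrable_continuous_interval continuous_intros)

lemma memory_dissipation_nonneg: "memory_dissipation \<ge> 0"
  unfolding memory_dissipation_def
  using integral_nonneg[OF integrable_neg[OF integrable_kernel_deriv_dxeta_sq]]
    kernel_deriv_nonpos dxeta_sq_nonneg
  by (simp add: mult_nonpos_nonneg)

lemma memory_norm_le: "\<delta> * memory_norm \<le> memory_dissipation"
proof -
  have "\<delta> * memory_norm = integral {0..} (\<lambda>s. \<delta> * (\<kappa> s * dxeta_sq s))"
    by (simp add: memory_norm_def)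
  also have "\<dots> \<le> integral {0..} (\<lambda>s. - (\<kappa>' s * dxeta_sq s))"
  proof (rule integral_le[OF integrable_on_mult_right[OF integrable_kernel_dxeta_sq]
        integrable_neg[OF integrable_kernel_deriv_dxeta_sq]])
    fix s :: real assume "s \<in> {0..}"
    then have "(\<delta> * \<kappa> s) * dxeta_sq s \<le> (- \<kappa>' s) * dxeta_sq s"
      using kernel_deriv_le[of s] by (intro mult_right_mono dxeta_sq_nonneg) auto
    then show "\<delta> * (\<kappa> s * dxeta_sq s) \<le> - (\<kappa>' s * dxeta_sq s)" by (simp add: mult.assoc)
  qed
  finally show ?thesis by (simp add: memory_dissipation_def)
qed

lemma coupling_estimate:
  assumes e: "\<epsilon> > 0"
  shows "- (2 * beta / g0 \<kappa>) * integral {0..} (\<lambda>s. \<kappa> s * dphi_dxeta s)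
    \<le> \<epsilon> * dphi_sq + (beta^2 / (g0 \<kappa> * \<epsilon>)) * memory_norm"
proof -
  have young: "- (2 * beta / g0 \<kappa>) * (p * q) \<le> (\<epsilon> / g0 \<kappa>) * p^2 + (beta^2 / (g0 \<kappa> * \<epsilon>)) * q^2"
    for p q :: real
    using divide_right_mono[OF young_inequality_real[OF e, of p "- beta * q"], of "g0 \<kappa>"] g0_pos
    by (simp add: field_simps power_mult_distrib)
  have pointwise: "- (2 * beta / g0 \<kappa>) * dphi_dxeta s
      \<le> (\<epsilon> / g0 \<kappa>) * dphi_sq + (beta^2 / (g0 \<kappa> * \<epsilon>)) * dxeta_sq s" for s
  proof -
    have "- (2 * beta / g0 \<kappa>) * dphi_dxeta s
        = integral {0..pi} (\<lambda>x. - (2 * beta / g0 \<kappa>) * (dt phi x t * dx (slice eta s) x t))"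
      by (simp add: dphi_dxeta_def)
    also have "\<dots> \<le> integral {0..pi} (\<lambda>x. (\<epsilon> / g0 \<kappa>) * (dt phi x t)^2
        + (beta^2 / (g0 \<kappa> * \<epsilon>)) * (dx (slice eta s) x t)^2)"
      by (intro integral_le young integrable_continuous_interval continuous_intros)
    also have "\<dots> = (\<epsilon> / g0 \<kappa>) * dphi_sq + (beta^2 / (g0 \<kappa> * \<epsilon>)) * dxeta_sq s"
      unfolding dphi_sq_def dxeta_sq_def
      by (intro integral_linear_combination integrable_continuous_interval continuous_intros)
    finally show ?thesis .
  qed
  have "- (2 * beta / g0 \<kappa>) * integral {0..} (\<lambda>s. \<kappa> s * dphi_dxeta s)
      = integral {0..} (\<lambda>s. - (2 * beta / g0 \<kappa>) * (\<kappa> s * dphi_dxeta s))"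
    by simp
  also have "\<dots> \<le> integral {0..} (\<lambda>s. ((\<epsilon> / g0 \<kappa>) * dphi_sq) * \<kappa> s
      + (beta^2 / (g0 \<kappa> * \<epsilon>)) * (\<kappa> s * dxeta_sq s))"
    using mult_left_mono[OF pointwise less_imp_le[OF kernel_pos]]
    by (intro integral_le integrable_add integrable_on_mult_right integrable_kernel_dphi_dxeta
        integrable_kernel integrable_kernel_dxeta_sq) (auto simp: algebra_simps)
  also have "\<dots> = ((\<epsilon> / g0 \<kappa>) * dphi_sq) * g0 \<kappa> + (beta^2 / (g0 \<kappa> * \<epsilon>)) * memory_norm"
    unfolding memory_norm_def g0_def[of \<kappa>]
    by (rule integral_linear_combination[OF integrable_kernel integrable_kernel_dxeta_sq])
  also have "\<dots> = \<epsilon> * dphi_sq + (beta^2 / (g0 \<kappa> * \<epsilon>)) * memory_norm"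
    using g0_pos by simp
  finally show ?thesis .
qed

lemma dxeta_dxeta_le: "dxeta_dxeta \<sigma> s \<le> (1/2) * dxeta_sq \<sigma> + (1/2) * dxeta_sq s"
proof -
  have young: "p * q \<le> (1/2) * p^2 + (1/2) * q^2" for p q :: real
    using young_inequality_real[of 1 p q] by simp
  have "dxeta_dxeta \<sigma> s \<le> integral {0..pi} (\<lambda>x. (1/2) * (dx (slice eta \<sigma>) x t)^2
      + (1/2) * (dx (slice eta s) x t)^2)"
    unfolding dxeta_dxeta_def
    by (intro integral_le young integrable_continuous_interval continuous_intros)
  also have "\<dots> = (1/2) * dxeta_sq \<sigma> + (1/2) * dxeta_sq s"
    unfolding dxeta_sq_def
    by (intro integral_linear_combination integrable_continuous_interval continuous_intros)
  finally show ?thesis .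
qed

lemma memory_dxeta_le:
  assumes "s \<ge> 0"
  shows "memory_dxeta s \<le> (1/2) * memory_norm + (dxeta_sq s / 2) * g0 \<kappa>"
proof -
  have "memory_dxeta s \<le> integral {0..} (\<lambda>\<sigma>. (1/2) * (\<kappa> \<sigma> * dxeta_sq \<sigma>) + (dxeta_sq s / 2) * \<kappa> \<sigma>)"
    unfolding memory_dxeta_def
    using mult_left_mono[OF dxeta_dxeta_le less_imp_le[OF kernel_pos]] assms
    by (intro integral_le integrable_add integrable_on_mult_right integrable_kernel_dxeta_dxeta
        integrable_kernel integrable_kernel_dxeta_sq) (auto simp: algebra_simps)
  also have "\<dots> = (1/2) * memory_norm + (dxeta_sq s / 2) * g0 \<kappa>"
    unfolding memory_norm_def g0_def
    by (rule integral_linear_combination[OF integrable_kernel_dxeta_sq integrable_kernel])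
  finally show ?thesis .
qed

lemma memory_estimate: "integral {0..} (\<lambda>s. \<kappa> s * memory_dxeta s) \<le> g0 \<kappa> * memory_norm"
proof -
  have "integral {0..} (\<lambda>s. \<kappa> s * memory_dxeta s)
      \<le> integral {0..} (\<lambda>s. ((1/2) * memory_norm) * \<kappa> s + (g0 \<kappa> / 2) * (\<kappa> s * dxeta_sq s))"
    using mult_left_mono[OF memory_dxeta_le less_imp_le[OF kernel_pos]]
    by (intro integral_le integrable_add integrable_on_mult_right integrable_kernel_memory_dxeta
        integrable_kernel integrable_kernel_dxeta_sq) (auto simp: algebra_simps)
  also have "\<dots> = ((1/2) * memory_norm) * g0 \<kappa> + (g0 \<kappa> / 2) * memory_norm"
    unfolding memory_norm_def g0_def[of \<kappa>]
    by (rule integral_linear_combination[OF integrable_kernel integrable_kernel_dxeta_sq])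
  also have "\<dots> = g0 \<kappa> * memory_norm" by simp
  finally show ?thesis .
qed

text \<open>Young's inequality, and the Poincare inequality for \<open>\<eta>(s)\<close>, which vanishes at \<open>x = 0\<close>.\<close>

lemma theta_eta_estimate:
  assumes s: "s \<ge> 0" and \<gamma>: "\<gamma> > 0"
  shows "\<bar>theta_eta t s\<bar> \<le> \<gamma> * theta_sq + (pi^2 / (4 * \<gamma>)) * dxeta_sq s"
proof -
  have "\<bar>theta_eta t s\<bar> \<le> integral {0..pi} (\<lambda>x. \<gamma> * (theta x t)^2 + (1 / (4 * \<gamma>)) * (eta x t s)^2)"
    unfolding theta_eta_def real_norm_def[symmetric]
  proof (rule integral_norm_bound_integral)
    show "norm (theta x t * eta x t s) \<le> \<gamma> * (theta x t)^2 + (1 / (4 * \<gamma>)) * (eta x t s)^2" for x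
      using young_inequality_real[of "2 * \<gamma>" "\<bar>theta x t\<bar>" "\<bar>eta x t s\<bar>"] \<gamma>
      by (simp add: abs_mult field_simps)
  qed (use \<gamma> in \<open>auto intro!: integrable_continuous_interval continuous_intros\<close>)
  also have "\<dots> = \<gamma> * theta_sq + (1 / (4 * \<gamma>)) * integral {0..pi} (\<lambda>x. (eta x t s)^2)"
    unfolding theta_sq_def
    by (intro integral_linear_combination integrable_continuous_interval continuous_intros)
  also have "\<dots> \<le> \<gamma> * theta_sq + (1 / (4 * \<gamma>)) * (pi^2 * dxeta_sq s)"
  proof -
    have "integral {0..pi} (\<lambda>x. (eta x t s)^2) \<le> (pi - 0)^2 * dxeta_sq s"
      unfolding dxeta_sq_def using eta_boundary[OF s]
      by (intro poincare_inequality eta_regular_has_derivative(1)[OF eta_reg] continuous_intros) auto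
    then show ?thesis using \<gamma> by (intro add_left_mono mult_left_mono) auto
  qed
  finally show ?thesis by simp
qed

lemma kernel_deriv_theta_eta_le:
  assumes s: "s \<ge> 0" and \<gamma>: "\<gamma> > 0"
  shows "- (\<kappa>' s * theta_eta t s) \<le> - \<kappa>' s * (\<gamma> * theta_sq + (pi^2 / (4 * \<gamma>)) * dxeta_sq s)"
proof -
  have "- (\<kappa>' s * theta_eta t s) \<le> - \<kappa>' s * \<bar>theta_eta t s\<bar>"
    using mult_left_mono[OF abs_ge_self, of "- \<kappa>' s" "theta_eta t s"] kernel_deriv_nonpos[OF s]
    by simp
  also have "\<dots> \<le> - \<kappa>' s * (\<gamma> * theta_sq + (pi^2 / (4 * \<gamma>)) * dxeta_sq s)"
    using kernel_deriv_nonpos[OF s] by (intro mult_left_mono theta_eta_estimate[OF s \<gamma>]) auto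
  finally show ?thesis .
qed

lemma kernel_deriv_estimate:
  "- (2 * c / g0 \<kappa>) * integral {0..} (\<lambda>s. \<kappa>' s * theta_eta t s)
    \<le> c * theta_sq + (c * pi^2 * (1 - integral {0..} \<kappa>') / (g0 \<kappa>)^2) * memory_dissipation"
proof -
  define K where "K = - integral {0..} \<kappa>'"
  have K: "K \<ge> 0" using integral_kernel_deriv_nonpos by (simp add: K_def)
  \<comment> \<open>This weight makes the \<open>\<theta>\<close>-part at most \<open>c \<parallel>\<theta>\<parallel>\<^sup>2\<close>.\<close>
  define \<gamma> where "\<gamma> = g0 \<kappa> / (2 * (K + 1))"
  have \<gamma>: "\<gamma> > 0" using g0_pos K by (simp add: \<gamma>_def)
  define a where "a = (2 * c / g0 \<kappa>) * (\<gamma> * theta_sq)"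
  define a' where "a' = (2 * c / g0 \<kappa>) * (pi^2 / (4 * \<gamma>))"
  have scale: "2 * c / g0 \<kappa> \<ge> 0" using c_pos g0_pos by simp
  have "- (2 * c / g0 \<kappa>) * integral {0..} (\<lambda>s. \<kappa>' s * theta_eta t s)
      = integral {0..} (\<lambda>s. (2 * c / g0 \<kappa>) * (- (\<kappa>' s * theta_eta t s)))"
    by simp
  also have "\<dots> \<le> integral {0..} (\<lambda>s. (- a) * \<kappa>' s + (- a') * (\<kappa>' s * dxeta_sq s))"
  proof (intro integral_le integrable_add integrable_on_mult_right integrable_neg
      integrable_kernel_deriv_theta_eta integrable_kernel_deriv integrable_kernel_deriv_dxeta_sq)
    fix s :: real assume "s \<in> {0..}"
    from mult_left_mono[OF kernel_deriv_theta_eta_le[OF _ \<gamma>] scale] this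
    show "(2 * c / g0 \<kappa>) * (- (\<kappa>' s * theta_eta t s))
        \<le> (- a) * \<kappa>' s + (- a') * (\<kappa>' s * dxeta_sq s)"
      by (simp add: a_def a'_def algebra_simps)
  qed
  also have "\<dots> = (- a) * integral {0..} \<kappa>' + (- a') * integral {0..} (\<lambda>s. \<kappa>' s * dxeta_sq s)"
    by (rule integral_linear_combination[OF integrable_kernel_deriv integrable_kernel_deriv_dxeta_sq])
  also have "\<dots> = a * K + a' * memory_dissipation"
    by (simp add: K_def memory_dissipation_def)
  also have "a * K \<le> c * theta_sq"
  proof -
    have "a * K = c * theta_sq * (K / (K + 1))"
      unfolding a_def \<gamma>_def using g0_pos K by (simp add: field_simps)
    also have "\<dots> \<le> c * theta_sq * 1"
      using c_pos theta_sq_nonneg K by (intro mult_left_mono) auto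
    finally show ?thesis by simp
  qed
  moreover have "a' = c * pi^2 * (1 - integral {0..} \<kappa>') / (g0 \<kappa>)^2"
    unfolding a'_def \<gamma>_def K_def using g0_pos K by (simp add: field_simps power2_eq_square K_def)
  ultimately show ?thesis by simp
qed

lemma F1_derivative_le:
  assumes e: "\<epsilon> > 0"
  shows "- (2 * c / g0 \<kappa>) * integral {0..} (\<lambda>s. \<kappa> s * (dtheta_eta t s + theta_dteta t s))
    \<le> - c * theta_sq - memory_norm + \<epsilon> * dphi_sq + F1_constant c beta * (1 + 1 / \<epsilon>) * memory_dissipation"
proof -
  define g N V where "g = g0 \<kappa>" and "N = memory_dissipation" and "V = memory_norm"
  define C where "C = c * pi^2 * (1 - integral {0..} \<kappa>') / g^2"
  have g: "g > 0" using g0_pos by (simp add: g_def)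
  have VN: "V \<le> N / \<delta>"
    using memory_norm_le decay_rate_pos by (simp add: V_def N_def field_simps)
  have N: "N \<ge> 0" using memory_dissipation_nonneg by (simp add: N_def)
  have C: "C \<ge> 0" using c_pos integral_kernel_deriv_nonpos by (simp add: C_def)
  have "- (2 * c / g0 \<kappa>) * integral {0..} (\<lambda>s. \<kappa> s * (dtheta_eta t s + theta_dteta t s))
      \<le> - 2 * c * theta_sq + (\<epsilon> * dphi_sq + (beta^2 / (g * \<epsilon>)) * V) + (2 / g) * (g * V)
        + (c * theta_sq + C * N)"
    unfolding F1_derivative_eq
    using coupling_estimate[OF e] kernel_deriv_estimate mult_left_mono[OF memory_estimate, of "2 / g"] g
    by (simp add: g_def V_def N_def C_def)
  also have "\<dots> = - c * theta_sq - V + \<epsilon> * dphi_sq + ((beta^2 / (g * \<epsilon>)) * V + 3 * V + C * N)"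
    using g by (simp add: algebra_simps)
  also have "(beta^2 / (g * \<epsilon>)) * V + 3 * V + C * N
      \<le> (beta^2 / (g * \<delta>)) * (N / \<epsilon>) + (3 / \<delta>) * N + C * N"
  proof -
    have "(beta^2 / (g * \<epsilon>)) * V \<le> (beta^2 / (g * \<epsilon>)) * (N / \<delta>)"
      using VN g e by (intro mult_left_mono) auto
    moreover have "3 * V \<le> (3 / \<delta>) * N" using VN by simp
    ultimately show ?thesis by (simp add: field_simps)
  qed
  also have "\<dots> \<le> F1_constant c beta * (1 + 1 / \<epsilon>) * N"
    unfolding F1_constant_def C_def[symmetric] g_def[symmetric]
    using N C e decay_rate_pos g by (simp add: field_simps mult_left_mono add_increasing add_increasing2)
  finally show ?thesis by (simp add: N_def V_def)
qed

lemma F1_derivative_estimate: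
  assumes "\<epsilon> > 0"
  shows "\<exists>D. (F1 c \<kappa> theta eta has_real_derivative D) (at t) \<and>
    D \<le> - c * (L2norm (\<lambda>x. theta x t))^2 - Vnorm2 \<kappa> eta t + \<epsilon> * (L2norm (\<lambda>x. dt phi x t))^2
       - F1_constant c beta * (1 + 1 / \<epsilon>) *
         integral {0..} (\<lambda>s. \<kappa>' s * (L2norm (\<lambda>x. dx (slice eta s) x t))^2)"
proof -
  have dxeta: "(L2norm (\<lambda>x. dx (slice eta s) x t))^2 = dxeta_sq s" for s
    unfolding dxeta_sq_def by (intro L2norm_square continuous_intros)
  have "(L2norm (\<lambda>x. theta x t))^2 = theta_sq" "(L2norm (\<lambda>x. dt phi x t))^2 = dphi_sq"
    "Vnorm2 \<kappa> eta t = memory_norm"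
    "integral {0..} (\<lambda>s. \<kappa>' s * (L2norm (\<lambda>x. dx (slice eta s) x t))^2) = - memory_dissipation"
    unfolding theta_sq_def dphi_sq_def memory_norm_def memory_dissipation_def Vnorm2_def dxeta
    by (auto intro!: L2norm_square continuous_intros)
  then show ?thesis
    using F1_has_derivative F1_derivative_le[OF assms] by auto
qed

end

theorem lemma5:
  fixes rho J c mu b alpha xi beta :: real
    and kappa kappa' :: "real \<Rightarrow> real"
  assumes pos: "rho > 0" "J > 0" "c > 0" "mu > 0" "b > 0" "alpha > 0" "xi > 0"
    and coup: "mu * xi > b^2"
    and beta: "beta \<noteq> 0"
    and h1: "continuous_on {0..} kappa" "kappa integrable_on {0..}"
    and h2: "\<And>s. s \<ge> 0 \<Longrightarrow> kappa s > 0"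
    and kderiv: "\<And>s. s \<ge> 0 \<Longrightarrow> (kappa has_real_derivative kappa' s) (at s within {0..})"
    and kcont: "continuous_on {0..} kappa'"
    and h2': "\<And>s. s \<ge> 0 \<Longrightarrow> kappa' s \<le> 0"
    and h4: "\<exists>\<delta>>0. \<forall>s\<ge>0. kappa' s \<le> - \<delta> * kappa s"
  shows "\<exists>M>0. \<forall>u phi theta eta.
           is_solution rho J c mu b alpha xi beta kappa u phi theta eta \<longrightarrow>
           (\<forall>\<epsilon>1>0. \<forall>t>0. \<exists>D. (F1 c kappa theta eta has_real_derivative D) (at t) \<and>
              D \<le> - c * (L2norm (\<lambda>x. theta x t))^2 - Vnorm2 kappa eta t
                   + \<epsilon>1 * (L2norm (\<lambda>x. dt phi x t))^2
                   - M * (1 + 1 / \<epsilon>1) *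
                     integral {0..} (\<lambda>s. kappa' s * (L2norm (\<lambda>x. dx (slice eta s) x t))^2))"
proof -
  obtain \<delta> where \<delta>: "\<delta> > 0" "\<forall>s\<ge>0. kappa' s \<le> - \<delta> * kappa s" using h4 by blast
  interpret memory_kernel kappa kappa' \<delta>
    by unfold_locales (use h1(1) kderiv kcont h2 \<delta> in auto)
  show ?thesis
  proof (rule exI[of _ "F1_constant c beta"], intro conjI allI impI)
    show "F1_constant c beta > 0" using pos(3) by (intro F1_constant_pos) simp
    fix u phi theta :: "real \<Rightarrow> real \<Rightarrow> real" and eta :: "real \<Rightarrow> real \<Rightarrow> real \<Rightarrow> real"
      and \<epsilon>1 t :: real
    assume sol: "is_solution rho J c mu b alpha xi beta kappa u phi theta eta"
      and "\<epsilon>1 > 0" "t > 0"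
    obtain B where "solution_bound B phi theta eta t"
      using solution_bound_exists sol unfolding is_solution_def by blast
    then interpret solution_at kappa kappa' \<delta> rho J c mu b alpha xi beta u phi theta eta t B
      using pos(3) sol \<open>t > 0\<close> by unfold_locales
    show "\<exists>D. (F1 c kappa theta eta has_real_derivative D) (at t) \<and>
        D \<le> - c * (L2norm (\<lambda>x. theta x t))^2 - Vnorm2 kappa eta t
          + \<epsilon>1 * (L2norm (\<lambda>x. dt phi x t))^2
          - F1_constant c beta * (1 + 1 / \<epsilon>1) *
            integral {0..} (\<lambda>s. kappa' s * (L2norm (\<lambda>x. dx (slice eta s) x t))^2)"
      by (rule F1_derivative_estimate[OF \<open>\<epsilon>1 > 0\<close>])
  qed
qed

end
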